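(* Let $m,n\ge 1$ and let $\mathcal{H}=\mathbb{R}^{m\times n}$ with matrix inner product $\langle \mathbf{A},\mathbf{B}\rangle_{\mathcal{H}}=\mathbf{A}^\intercal\mathbf{B}\in\mathbb{R}^{n\times n}$. Let $\mathbf{V}\in\mathbb{R}^{n\times n}$ be a nonzero symmetric matrix such that $\langle \langle \mathbf{X},\mathbf{X}\rangle_{\mathcal{H}},\mathbf{V}/\|\mathbf{V}\|\rangle\ge 0$ for all $\mathbf{X}\in\mathcal{H}$, and set $\|\mathbf{X}\|_{\mathcal{H}}(\mathbf{V})=\big(\langle \mathbf{X}^\intercal\mathbf{X},\mathbf{V}/\|\mathbf{V}\|\rangle\big)^{1/2}$. Let $\mathcal{Y}$ be a label set and let $\mathcal{D}$ be a distribution over $\mathcal{H}\times\mathcal{Y}$ such that with probability $1$ we have $\|\mathbf{X}\|_{\mathcal{H}}(\mathbf{V})\le R'$. Let $\mathcal{H}'_p=\{\mathbf{W}'\in\mathcal{H}:\|\mathbf{W}'\|_{\mathcal{H}}(\mathbf{V})\le B'\}$ and let $\ell:\mathcal{H}'_p\times(\mathcal{H}\times\mathcal{Y})\to\mathbb{R}$ be a loss of the form $$\ell(\mathbf{W}',(\mathbf{X},y))=\Phi\Big(\big\langle \langle\mathbf{W}',\mathbf{X}\rangle_{\mathcal{H}},\tfrac{\mathbf{V}}{\|\mathbf{V}\|}\big\rangle,y\Big),$$ where for every $y\in\mathcal{Y}$ the map $a\mapsto\Phi(a,y)$ is $\rho$-Lipschitz and $\max_{a\in[-B'R',B'R']}|\Phi(a,y)|\le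 c'$. Then for any $\delta\in(0,1)$, with probability at least $1-\delta$ over the choice of an i.i.d. sample $\mathcal{S}$ of size $N$ from $\mathcal{D}$, $$\forall\,\mathbf{W}'\in\mathcal{H}'_p:\quad L_{\mathcal{D}}(\mathbf{W}')\le L_{\mathcal{S}}(\mathbf{W}')+\frac{2\rho B'R'}{\sqrt N}+c'\sqrt{\frac{2\ln(2/\delta)}{N}}.$$
   Context: For matrices $\mathbf{A},\mathbf{B}$ of the same size, $\langle\mathbf{A},\mathbf{B}\rangle=\sum_{i,j}a_{ij}b_{ij}$ is the Frobenius inner product and $\|\mathbf{A}\|$ the Frobenius norm. For a sample $\mathcal{S}=((\mathbf{X}_1,y_1),\dots,(\mathbf{X}_N,y_N))$, $L_{\mathcal{S}}(\mathbf{W}')=\frac1N\sum_{i=1}^N\ell(\mathbf{W}',(\mathbf{X}_i,y_i))$ is the empirical loss and $L_{\mathcal{D}}(\mathbf{W}')=\mathbb{E}_{(\mathbf{X},y)\sim\mathcal{D}}[\ell(\mathbf{W}',(\mathbf{X},y))]$ is the true loss. *)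

theory Defs
  imports "HOL-Probability.Probability"
begin

text \<open>H = real^'n^'m (m x n matrices, rows indexed by 'm). On real^'n^'n the
library inner product and norm are the Frobenius inner product and norm.\<close>

definition Vnormalized :: "real^'n^'n \<Rightarrow> real^'n^'n" where
  "Vnormalized V = V /\<^sub>R norm V"

definition innerH :: "real^'n^'m \<Rightarrow> real^'n^'m \<Rightarrow> real^'n^'n" where
  "innerH A B = transpose A ** B"

definition normHV :: "real^'n^'n \<Rightarrow> real^'n^'m \<Rightarrow> real" where
  "normHV V X = sqrt (inner (innerH X X) (Vnormalized V))"

definition lossV :: "(real \<Rightarrow> 'y \<Rightarrow> real) \<Rightarrow> real^'n^'n \<Rightarrow> real^'n^'m \<Rightarrow> ((real^'n^'m) \<times> 'y) \<Rightarrow> real" where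
  "lossV \<Phi> V W p = \<Phi> (inner (innerH W (fst p)) (Vnormalized V)) (snd p)"

end

theory Submission
  imports Defs
begin

(*
  Cutting off the samples at the almost-sure bound R' makes the losses uniformly bounded
  by c' and rho R'-Lipschitz in W with respect to the seminorm normHV V. Over a countable
  dense set of parameters, the worst-case gap between true and empirical risk changes by at
  most 2 c' when one sample point is replaced, so McDiarmid's inequality keeps it within
  c' sqrt (2 N ln (2 / delta)) of its mean with probability at least 1 - delta / 2.
  Symmetrisation with a ghost sample bounds the mean by twice the Rademacher complexity;
  the Ledoux-Talagrand contraction reduces that to the linear class X -> <W^T X, V / |V|>,
  for which Cauchy-Schwarz for this positive semidefinite form and Jensen give
  rho B' R' sqrt N. Density and the Lipschitz property extend the bound to all W.
*)

section \<open>Rademacher averages over sign vectors\<close>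

definition sign_vectors :: "nat \<Rightarrow> (nat \<Rightarrow> real) set" where
  "sign_vectors N = PiE {..<N} (\<lambda>_. {-1, 1})"

definition flip_sign :: "nat \<Rightarrow> (nat \<Rightarrow> real) \<Rightarrow> nat \<Rightarrow> real" where
  "flip_sign k \<sigma> = \<sigma>(k := - \<sigma> k)"

lemma finite_sign_vectors [simp]: "finite (sign_vectors N)"
  unfolding sign_vectors_def by (auto intro!: finite_PiE)

lemma card_sign_vectors: "card (sign_vectors N) = 2 ^ N"
  unfolding sign_vectors_def by (simp add: card_PiE numeral_2_eq_2)

lemma ones_in_sign_vectors: "(\<lambda>i\<in>{..<N}. 1) \<in> sign_vectors N"
  unfolding sign_vectors_def by auto

lemma sign_vectors_cases: "\<sigma> \<in> sign_vectors N \<Longrightarrow> i < N \<Longrightarrow> \<sigma> i = -1 \<or> \<sigma> i = 1"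
  unfolding sign_vectors_def by (auto simp: PiE_iff)

lemma abs_sign_vectors: "\<sigma> \<in> sign_vectors N \<Longrightarrow> i < N \<Longrightarrow> \<bar>\<sigma> i\<bar> = 1"
  using sign_vectors_cases by fastforce

lemma flip_sign_in_sign_vectors: "k < N \<Longrightarrow> \<sigma> \<in> sign_vectors N \<Longrightarrow> flip_sign k \<sigma> \<in> sign_vectors N"
  unfolding sign_vectors_def flip_sign_def by (auto simp: PiE_iff extensional_def)

lemma flip_sign_flip_sign [simp]: "flip_sign k (flip_sign k \<sigma>) = \<sigma>"
  unfolding flip_sign_def by auto

lemma sum_sign_vectors_flip_sign:
  "k < N \<Longrightarrow> (\<Sum>\<sigma>\<in>sign_vectors N. g (flip_sign k \<sigma>)) = (\<Sum>\<sigma>\<in>sign_vectors N. g \<sigma>)"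
  by (rule sum.reindex_bij_witness[of _ "flip_sign k" "flip_sign k"]) (auto intro: flip_sign_in_sign_vectors)

lemma sum_sign_vectors_mult:
  assumes "i < N" "j < N"
  shows "(\<Sum>\<sigma>\<in>sign_vectors N. \<sigma> i * \<sigma> j) = (if i = j then 2 ^ N else 0)"
proof (cases "i = j")
  case True
  have "\<sigma> i * \<sigma> i = 1" if "\<sigma> \<in> sign_vectors N" for \<sigma>
    using sign_vectors_cases[OF that assms(1)] by auto
  then show ?thesis using True by (simp add: card_sign_vectors)
next
  case False
  have "(\<Sum>\<sigma>\<in>sign_vectors N. \<sigma> i * \<sigma> j) = (\<Sum>\<sigma>\<in>sign_vectors N. flip_sign i \<sigma> i * flip_sign i \<sigma> j)"
    by (rule sum_sign_vectors_flip_sign[OF assms(1), symmetric])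
  also have "\<dots> = - (\<Sum>\<sigma>\<in>sign_vectors N. \<sigma> i * \<sigma> j)"
    using False by (simp add: flip_sign_def sum_negf)
  finally show ?thesis using False by simp
qed

lemma sum_sign_vectors_quadratic:
  "(\<Sum>\<sigma>\<in>sign_vectors N. \<Sum>i<N. \<Sum>j<N. \<sigma> i * \<sigma> j * a i j) = 2 ^ N * (\<Sum>i<N. a i i)"
proof -
  have "(\<Sum>\<sigma>\<in>sign_vectors N. \<Sum>i<N. \<Sum>j<N. \<sigma> i * \<sigma> j * a i j)
      = (\<Sum>i<N. \<Sum>j<N. (\<Sum>\<sigma>\<in>sign_vectors N. \<sigma> i * \<sigma> j) * a i j)"
    by (simp add: sum.swap[of _ "sign_vectors N"] sum_distrib_right)
  also have "\<dots> = (\<Sum>i<N. \<Sum>j<N. if i = j then 2 ^ N * a i j else 0)"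
    by (intro sum.cong refl) (simp add: sum_sign_vectors_mult)
  finally show ?thesis by (simp add: sum_distrib_left)
qed

lemma bdd_above_signed_sum:
  assumes "\<sigma> \<in> sign_vectors N" "\<And>w i. w \<in> T \<Longrightarrow> i < N \<Longrightarrow> \<bar>f i w\<bar> \<le> K"
  shows "bdd_above ((\<lambda>w. \<Sum>i<N. \<sigma> i * f i w) ` T)"
proof (rule bdd_aboveI2)
  fix w assume "w \<in> T"
  then have "\<sigma> i * f i w \<le> K" if "i < N" for i
    using assms(2)[OF \<open>w \<in> T\<close> that] sign_vectors_cases[OF assms(1) that] by auto
  then show "(\<Sum>i<N. \<sigma> i * f i w) \<le> real N * K"
    using sum_mono[of "{..<N}" "\<lambda>i. \<sigma> i * f i w" "\<lambda>_. K"] by simp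
qed

lemma SUP_add_SUP_diff_mono:
  fixes u p q :: "'w \<Rightarrow> real"
  assumes T: "T \<noteq> {}"
    and contr: "\<And>w w'. w \<in> T \<Longrightarrow> w' \<in> T \<Longrightarrow> \<bar>p w - p w'\<bar> \<le> \<bar>q w - q w'\<bar>"
    and bdd_add: "bdd_above ((\<lambda>w. u w + q w) ` T)"
    and bdd_diff: "bdd_above ((\<lambda>w. u w - q w) ` T)"
  shows "(SUP w\<in>T. u w + p w) + (SUP w\<in>T. u w - p w)
       \<le> (SUP w\<in>T. u w + q w) + (SUP w\<in>T. u w - q w)"
proof -
  define R where "R = (SUP w\<in>T. u w + q w) + (SUP w\<in>T. u w - q w)"
  have pair: "u w + p w + (u w' - p w') \<le> R" if "w \<in> T" "w' \<in> T" for w w'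
  proof -
    have "u w + q w \<le> (SUP w\<in>T. u w + q w)" "u w' + q w' \<le> (SUP w\<in>T. u w + q w)"
      "u w - q w \<le> (SUP w\<in>T. u w - q w)" "u w' - q w' \<le> (SUP w\<in>T. u w - q w)"
      using that bdd_add bdd_diff by (auto intro: cSUP_upper2)
    then show ?thesis using contr[OF that] unfolding R_def by (auto simp: abs_le_iff)
  qed
  have "(SUP w\<in>T. u w + p w) \<le> R - (u w' - p w')" if "w' \<in> T" for w'
    using pair[OF _ that] T by (intro cSUP_least) (auto simp: algebra_simps)
  then have "u w' - p w' \<le> R - (SUP w\<in>T. u w + p w)" if "w' \<in> T" for w'
    using that by fastforce
  then have "(SUP w\<in>T. u w - p w) \<le> R - (SUP w\<in>T. u w + p w)"
    using T by (intro cSUP_least) auto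
  then show ?thesis unfolding R_def by simp
qed

text \<open>Pair each sign vector with its flip at coordinate \<open>k\<close>.\<close>

lemma rademacher_replace_coordinate:
  fixes f g :: "nat \<Rightarrow> 'w \<Rightarrow> real"
  assumes T: "T \<noteq> {}" and k: "k < N"
    and same: "\<And>i w. i < N \<Longrightarrow> i \<noteq> k \<Longrightarrow> f i w = g i w"
    and contr: "\<And>w w'. w \<in> T \<Longrightarrow> w' \<in> T \<Longrightarrow> \<bar>f k w - f k w'\<bar> \<le> \<bar>g k w - g k w'\<bar>"
    and bounded: "\<And>w i. w \<in> T \<Longrightarrow> i < N \<Longrightarrow> \<bar>g i w\<bar> \<le> K"
  shows "(\<Sum>\<sigma>\<in>sign_vectors N. SUP w\<in>T. \<Sum>i<N. \<sigma> i * f i w)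
       \<le> (\<Sum>\<sigma>\<in>sign_vectors N. SUP w\<in>T. \<Sum>i<N. \<sigma> i * g i w)"
proof -
  define F where "F \<sigma> = (SUP w\<in>T. \<Sum>i<N. \<sigma> i * f i w)" for \<sigma>
  define G where "G \<sigma> = (SUP w\<in>T. \<Sum>i<N. \<sigma> i * g i w)" for \<sigma>
  have pair: "F \<sigma> + F (flip_sign k \<sigma>) \<le> G \<sigma> + G (flip_sign k \<sigma>)" if \<sigma>: "\<sigma> \<in> sign_vectors N" for \<sigma>
  proof -
    define u where "u w = (\<Sum>i\<in>{..<N} - {k}. \<sigma> i * g i w)" for w
    have split: "(\<Sum>i<N. \<tau> i * h i w) = \<tau> k * h k w + (\<Sum>i\<in>{..<N} - {k}. \<tau> i * h i w)"
      for \<tau> and h :: "nat \<Rightarrow> 'w \<Rightarrow> real" and w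
      using k by (subst sum.remove[of _ k]) auto
    have rest: "(\<Sum>i\<in>{..<N} - {k}. \<sigma> i * f i w) = u w"
      "(\<Sum>i\<in>{..<N} - {k}. flip_sign k \<sigma> i * f i w) = u w"
      "(\<Sum>i\<in>{..<N} - {k}. flip_sign k \<sigma> i * g i w) = u w" for w
      using same unfolding u_def flip_sign_def by (auto intro!: sum.cong)
    have F: "F \<sigma> = (SUP w\<in>T. u w + \<sigma> k * f k w)" "F (flip_sign k \<sigma>) = (SUP w\<in>T. u w - \<sigma> k * f k w)"
      and G: "G \<sigma> = (SUP w\<in>T. u w + \<sigma> k * g k w)" "G (flip_sign k \<sigma>) = (SUP w\<in>T. u w - \<sigma> k * g k w)"
      unfolding F_def G_def split rest u_def by (auto simp: flip_sign_def add.commute)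
    have flip: "flip_sign k \<sigma> \<in> sign_vectors N" by (rule flip_sign_in_sign_vectors[OF k \<sigma>])
    show ?thesis unfolding F G
    proof (rule SUP_add_SUP_diff_mono[OF T])
      show "\<bar>\<sigma> k * f k w - \<sigma> k * f k w'\<bar> \<le> \<bar>\<sigma> k * g k w - \<sigma> k * g k w'\<bar>"
        if "w \<in> T" "w' \<in> T" for w w'
        using contr[OF that] abs_sign_vectors[OF \<sigma> k] by (simp flip: right_diff_distrib add: abs_mult)
      show "bdd_above ((\<lambda>w. u w + \<sigma> k * g k w) ` T)"
        using bdd_above_signed_sum[of \<sigma> N T g K, OF \<sigma> bounded] unfolding split u_def by (simp add: add.commute)
      show "bdd_above ((\<lambda>w. u w - \<sigma> k * g k w) ` T)"
        using bdd_above_signed_sum[of "flip_sign k \<sigma>" N T g K, OF flip bounded] unfolding split rest by (simp add: flip_sign_def)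
    qed
  qed
  have "2 * (\<Sum>\<sigma>\<in>sign_vectors N. F \<sigma>) = (\<Sum>\<sigma>\<in>sign_vectors N. F \<sigma> + F (flip_sign k \<sigma>))"
    by (simp add: sum.distrib sum_sign_vectors_flip_sign[OF k])
  also have "\<dots> \<le> (\<Sum>\<sigma>\<in>sign_vectors N. G \<sigma> + G (flip_sign k \<sigma>))"
    by (rule sum_mono) (rule pair)
  also have "\<dots> = 2 * (\<Sum>\<sigma>\<in>sign_vectors N. G \<sigma>)"
    by (simp add: sum.distrib sum_sign_vectors_flip_sign[OF k])
  finally show ?thesis unfolding F_def G_def by simp
qed

text \<open>Ledoux--Talagrand contraction. The hybrid averages, which use the linear
  functions on the first \<open>k\<close> coordinates, increase with \<open>k\<close>.\<close>

lemma rademacher_contraction: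
  fixes a :: "nat \<Rightarrow> 'w \<Rightarrow> real" and \<phi> :: "nat \<Rightarrow> real \<Rightarrow> real"
  assumes T: "T \<noteq> {}" and \<rho>: "0 \<le> \<rho>"
    and lip: "\<And>i u v. i < N \<Longrightarrow> \<bar>\<phi> i u - \<phi> i v\<bar> \<le> \<rho> * \<bar>u - v\<bar>"
    and bound_a: "\<And>w i. w \<in> T \<Longrightarrow> i < N \<Longrightarrow> \<bar>a i w\<bar> \<le> M"
    and bound_\<phi>: "\<And>w i. w \<in> T \<Longrightarrow> i < N \<Longrightarrow> \<bar>\<phi> i (a i w)\<bar> \<le> M"
  shows "(\<Sum>\<sigma>\<in>sign_vectors N. SUP w\<in>T. \<Sum>i<N. \<sigma> i * \<phi> i (a i w))
       \<le> (\<Sum>\<sigma>\<in>sign_vectors N. SUP w\<in>T. \<Sum>i<N. \<sigma> i * (\<rho> * a i w))"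
proof -
  define hybrid where "hybrid k i w = (if i < k then \<rho> * a i w else \<phi> i (a i w))" for k i w
  define avg where "avg k = (\<Sum>\<sigma>\<in>sign_vectors N. SUP w\<in>T. \<Sum>i<N. \<sigma> i * hybrid k i w)" for k
  have step: "avg k \<le> avg (Suc k)" if "k < N" for k
    unfolding avg_def
  proof (rule rademacher_replace_coordinate[OF T that, where K = "M + \<rho> * M"])
    fix w w' assume "w \<in> T" "w' \<in> T"
    show "\<bar>hybrid k k w - hybrid k k w'\<bar> \<le> \<bar>hybrid (Suc k) k w - hybrid (Suc k) k w'\<bar>"
      using lip[OF that] \<rho> by (simp add: hybrid_def abs_mult flip: right_diff_distrib)
  next
    fix w i assume wi: "w \<in> T" "i < N"
    have "\<bar>\<rho> * a i w\<bar> \<le> \<rho> * M"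
      using bound_a[OF wi] \<rho> by (simp add: abs_mult mult_left_mono)
    moreover have "0 \<le> \<rho> * M" using bound_a[OF wi] \<rho> by simp
    ultimately show "\<bar>hybrid (Suc k) i w\<bar> \<le> M + \<rho> * M"
      using bound_a[OF wi] bound_\<phi>[OF wi] unfolding hybrid_def by auto
  qed (auto simp: hybrid_def)
  have "avg 0 \<le> avg k" if "k \<le> N" for k
    using that by (induction k) (auto intro: order_trans[OF _ step])
  from this[of N] show ?thesis
    unfolding avg_def hybrid_def by simp
qed

section \<open>Positive semidefinite bilinear forms\<close>

locale psd_bilinear =
  fixes b :: "'a::real_vector \<Rightarrow> 'a \<Rightarrow> real"
  assumes bilinear: "bilinear b"
    and symmetric: "b x y = b y x"
    and nonneg: "0 \<le> b x x"
begin

definition seminorm :: "'a \<Rightarrow> real" where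
  "seminorm x = sqrt (b x x)"

lemma seminorm_nonneg: "0 \<le> seminorm x"
  unfolding seminorm_def using nonneg by simp

lemma seminorm_square: "(seminorm x)\<^sup>2 = b x x"
  unfolding seminorm_def using nonneg by simp

lemma seminorm_minus_commute: "seminorm (x - y) = seminorm (y - x)"
  unfolding seminorm_def using bilinear by (simp add: bilinear_lsub bilinear_rsub)

lemma square_le_mult: "(b x y)\<^sup>2 \<le> b x x * b y y"
proof -
  have quadratic: "0 \<le> b x x + 2 * t * b x y + t\<^sup>2 * b y y" for t
    using nonneg[of "x + t *\<^sub>R y"] bilinear symmetric[of y x]
    by (simp add: bilinear_ladd bilinear_radd bilinear_lmul bilinear_rmul power2_eq_square algebra_simps)
  show ?thesis
  proof (cases "b y y = 0")
    case True
    have "b x y = 0"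
    proof (rule ccontr)
      assume "b x y \<noteq> 0"
      then have "b x x + 2 * (- (b x x + 1) / (2 * b x y)) * b x y = -1" by (simp add: field_simps)
      then show False using quadratic[of "- (b x x + 1) / (2 * b x y)"] True by simp
    qed
    then show ?thesis using True by simp
  next
    case False
    then have pos: "0 < b y y" using nonneg[of y] by simp
    have "b x x + 2 * (- b x y / b y y) * b x y + (- b x y / b y y)\<^sup>2 * b y y = b x x - (b x y)\<^sup>2 / b y y"
      using pos by (simp add: field_simps power2_eq_square)
    then have "(b x y)\<^sup>2 / b y y \<le> b x x" using quadratic[of "- b x y / b y y"] by simp
    then show ?thesis using pos by (simp add: divide_le_eq)
  qed
qed

lemma cauchy_schwarz: "\<bar>b x y\<bar> \<le> seminorm x * seminorm y"
proof -
  have "\<bar>b x y\<bar> = sqrt ((b x y)\<^sup>2)" by simp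
  also have "\<dots> \<le> sqrt (b x x * b y y)" using square_le_mult by (rule real_sqrt_le_mono)
  finally show ?thesis unfolding seminorm_def by (simp add: real_sqrt_mult)
qed

text \<open>The cross terms of the expanded square cancel on average over the signs.\<close>

lemma sum_sign_vectors_seminorm_square:
  "(\<Sum>\<sigma>\<in>sign_vectors N. (seminorm (\<Sum>i<N. \<sigma> i *\<^sub>R X i))\<^sup>2) = 2 ^ N * (\<Sum>i<N. (seminorm (X i))\<^sup>2)"
proof -
  interpret left: linear "\<lambda>x. b x y" for y using bilinear by (simp add: bilinear_def)
  interpret right: linear "\<lambda>y. b x y" for x using bilinear by (simp add: bilinear_def)
  have "(seminorm (\<Sum>i<N. \<sigma> i *\<^sub>R X i))\<^sup>2 = (\<Sum>i<N. \<Sum>j<N. \<sigma> i * \<sigma> j * b (X j) (X i))" for \<sigma>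
    unfolding seminorm_square left.sum right.sum left.scale right.scale
    by (simp add: sum_distrib_left mult_ac)
  then show ?thesis by (simp add: sum_sign_vectors_quadratic seminorm_square)
qed

lemma sum_sign_vectors_seminorm_le:
  assumes "\<And>i. i < N \<Longrightarrow> seminorm (X i) \<le> R" and "0 \<le> R"
  shows "(\<Sum>\<sigma>\<in>sign_vectors N. seminorm (\<Sum>i<N. \<sigma> i *\<^sub>R X i)) \<le> 2 ^ N * R * sqrt (real N)"
proof (rule power2_le_imp_le)
  have "(\<Sum>\<sigma>\<in>sign_vectors N. seminorm (\<Sum>i<N. \<sigma> i *\<^sub>R X i))\<^sup>2
      \<le> (\<Sum>\<sigma>\<in>sign_vectors N. (seminorm (\<Sum>i<N. \<sigma> i *\<^sub>R X i))\<^sup>2) * card (sign_vectors N)"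
    by (rule sum_squared_le_sum_of_squares)
  also have "\<dots> = 2 ^ N * (\<Sum>i<N. (seminorm (X i))\<^sup>2) * 2 ^ N"
    unfolding sum_sign_vectors_seminorm_square card_sign_vectors by simp
  also have "\<dots> \<le> 2 ^ N * (real N * R\<^sup>2) * 2 ^ N"
    using sum_mono[of "{..<N}" "\<lambda>i. (seminorm (X i))\<^sup>2" "\<lambda>_. R\<^sup>2"] assms(1) seminorm_nonneg
    by (simp add: power_mono)
  also have "\<dots> = (2 ^ N * R * sqrt (real N))\<^sup>2"
    by (simp add: power_mult_distrib power2_eq_square)
  finally show "(\<Sum>\<sigma>\<in>sign_vectors N. seminorm (\<Sum>i<N. \<sigma> i *\<^sub>R X i))\<^sup>2 \<le> (2 ^ N * R * sqrt (real N))\<^sup>2" .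
qed (simp add: \<open>0 \<le> R\<close>)

lemma rademacher_linear_bound:
  assumes T: "T \<noteq> {}" and bounded_T: "\<And>w. w \<in> T \<Longrightarrow> seminorm w \<le> B"
    and bounded_X: "\<And>i. i < N \<Longrightarrow> seminorm (X i) \<le> R"
    and "0 \<le> \<rho>" "0 \<le> B" "0 \<le> R"
  shows "(\<Sum>\<sigma>\<in>sign_vectors N. SUP w\<in>T. \<Sum>i<N. \<sigma> i * (\<rho> * b w (X i)))
       \<le> 2 ^ N * (\<rho> * B * R * sqrt (real N))"
proof -
  define Y where "Y \<sigma> = (\<Sum>i<N. \<sigma> i *\<^sub>R X i)" for \<sigma>
  interpret right: linear "\<lambda>y. b x y" for x using bilinear by (simp add: bilinear_def)
  have SUP_le: "(SUP w\<in>T. \<Sum>i<N. \<sigma> i * (\<rho> * b w (X i))) \<le> \<rho> * B * seminorm (Y \<sigma>)" for \<sigma>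
  proof (rule cSUP_least[OF T])
    fix w assume "w \<in> T"
    have "(\<Sum>i<N. \<sigma> i * (\<rho> * b w (X i))) = \<rho> * b w (Y \<sigma>)"
      unfolding Y_def right.sum right.scale by (simp add: sum_distrib_left mult_ac)
    also have "\<dots> \<le> \<rho> * (seminorm w * seminorm (Y \<sigma>))"
      using cauchy_schwarz[of w "Y \<sigma>"] \<open>0 \<le> \<rho>\<close> by (intro mult_left_mono) auto
    also have "\<dots> \<le> \<rho> * B * seminorm (Y \<sigma>)"
      using bounded_T[OF \<open>w \<in> T\<close>] \<open>0 \<le> \<rho>\<close> seminorm_nonneg[of "Y \<sigma>"]
      by (simp add: mult.assoc mult_left_mono mult_right_mono)
    finally show "(\<Sum>i<N. \<sigma> i * (\<rho> * b w (X i))) \<le> \<rho> * B * seminorm (Y \<sigma>)" .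
  qed
  have "(\<Sum>\<sigma>\<in>sign_vectors N. SUP w\<in>T. \<Sum>i<N. \<sigma> i * (\<rho> * b w (X i)))
      \<le> (\<Sum>\<sigma>\<in>sign_vectors N. \<rho> * B * seminorm (Y \<sigma>))"
    by (rule sum_mono) (rule SUP_le)
  also have "\<dots> \<le> \<rho> * B * (2 ^ N * R * sqrt (real N))"
    unfolding sum_distrib_left[symmetric] Y_def using sum_sign_vectors_seminorm_le[OF bounded_X] assms
    by (intro mult_left_mono) auto
  finally show ?thesis by (simp add: mult_ac)
qed

end

section \<open>McDiarmid's inequality\<close>

lemma (in prob_space) abs_integral_le_const:
  fixes h :: "'a \<Rightarrow> real"
  assumes "h \<in> borel_measurable M" and "\<And>x. x \<in> space M \<Longrightarrow> \<bar>h x\<bar> \<le> K"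
  shows "\<bar>\<integral>x. h x \<partial>M\<bar> \<le> K"
proof -
  have "integrable M h"
    by (rule integrable_const_bound[where B = K]) (use assms in auto)
  then have "\<bar>\<integral>x. h x \<partial>M\<bar> \<le> (\<integral>x. K \<partial>M)"
    by (intro order_trans[OF integral_abs_bound] integral_mono integrable_abs) (use assms in auto)
  then show ?thesis by (simp add: prob_space)
qed

lemma (in prob_space) Hoeffdings_lemma_oscillation:
  assumes F: "F \<in> borel_measurable M"
    and osc: "\<And>z z'. z \<in> space M \<Longrightarrow> z' \<in> space M \<Longrightarrow> \<bar>F z - F z'\<bar> \<le> c" and "l > 0"
  shows "(\<integral>\<^sup>+z. ennreal (exp (l * (F z - E))) \<partial>M)
      \<le> ennreal (exp (l * ((\<integral>z. F z \<partial>M) - E))) * ennreal (exp (l\<^sup>2 * c\<^sup>2 / 8))"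
proof -
  obtain z0 where z0: "z0 \<in> space M" using not_empty by blast
  define a where "a = (INF z\<in>space M. F z)"
  have bdd: "bdd_below (F ` space M)"
    by (rule bdd_belowI2[where m = "F z0 - c"]) (use osc[OF _ z0] in force)
  have "a \<le> F z" "F z \<le> a + c" if "z \<in> space M" for z
  proof -
    show "a \<le> F z" unfolding a_def using bdd that by (rule cINF_lower)
    have "F z - c \<le> F z'" if "z' \<in> space M" for z'
      using osc[OF \<open>z \<in> space M\<close> that] by simp
    then have "F z - c \<le> a" unfolding a_def by (intro cINF_greatest) (auto simp: not_empty)
    then show "F z \<le> a + c" by simp
  qed
  then interpret interval_bounded_random_variable M F a "a + c"
    by unfold_locales (use F in auto)
  define m where "m = (\<integral>z. F z \<partial>M)"
  have "(\<integral>\<^sup>+z. ennreal (exp (l * (F z - E))) \<partial>M)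
      = (\<integral>\<^sup>+z. ennreal (exp (l * (m - E))) * ennreal (exp (l * (F z - m))) \<partial>M)"
    by (rule nn_integral_cong) (simp add: ennreal_mult[symmetric] algebra_simps flip: exp_add)
  also have "\<dots> = ennreal (exp (l * (m - E))) * (\<integral>\<^sup>+z. ennreal (exp (l * (F z - m))) \<partial>M)"
    by (rule nn_integral_cmult) (use F in measurable)
  also have "\<dots> \<le> ennreal (exp (l * (m - E))) * ennreal (exp (l\<^sup>2 * c\<^sup>2 / 8))"
    using Hoeffdings_lemma_nn_integral[OF \<open>l > 0\<close>] unfolding m_def by (intro mult_left_mono) simp_all
  finally show ?thesis unfolding m_def .
qed

lemma (in prob_space) integral_last_coordinate:
  fixes f :: "(nat \<Rightarrow> 'a) \<Rightarrow> real"
  assumes f_meas: "f \<in> borel_measurable (PiM (insert n {..<n}) (\<lambda>_. M))"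
    and f_bound: "\<And>x. x \<in> space (PiM (insert n {..<n}) (\<lambda>_. M)) \<Longrightarrow> \<bar>f x\<bar> \<le> K"
    and f_diff: "\<And>x i z. x \<in> space (PiM (insert n {..<n}) (\<lambda>_. M)) \<Longrightarrow> i < Suc n \<Longrightarrow> z \<in> space M \<Longrightarrow>
           \<bar>f x - f (x(i := z))\<bar> \<le> c"
  defines "g \<equiv> \<lambda>x. \<integral>z. f (x(n := z)) \<partial>M"
  shows "g \<in> borel_measurable (PiM {..<n} (\<lambda>_. M))"
    and "\<And>x. x \<in> space (PiM {..<n} (\<lambda>_. M)) \<Longrightarrow> \<bar>g x\<bar> \<le> K"
    and "\<And>x i z. x \<in> space (PiM {..<n} (\<lambda>_. M)) \<Longrightarrow> i < n \<Longrightarrow> z \<in> space M \<Longrightarrow>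
           \<bar>g x - g (x(i := z))\<bar> \<le> c"
proof -
  let ?P = "PiM {..<n} (\<lambda>_. M)"
  have n: "n \<notin> {..<n}" by simp
  have upd_space: "x(n := z) \<in> space (PiM (insert n {..<n}) (\<lambda>_. M))" if "x \<in> space ?P" "z \<in> space M" for x z
    using measurable_space[OF measurable_component_update[OF that(1) n] that(2)] .
  have slice_meas: "(\<lambda>z. f (x(n := z))) \<in> borel_measurable M" if "x \<in> space ?P" for x
    using measurable_comp[OF measurable_component_update[OF that n] f_meas] by (simp add: comp_def)
  have "(\<lambda>(x, z). f (x(n := z))) = f \<circ> (\<lambda>(x, z). x(n := z))" by auto
  then have "(\<lambda>(x, z). f (x(n := z))) \<in> borel_measurable (?P \<Otimes>\<^sub>M M)"
    using measurable_comp[OF measurable_add_dim[of n "{..<n}" "\<lambda>_. M"] f_meas] by simp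
  then show "g \<in> borel_measurable ?P"
    unfolding g_def by (rule borel_measurable_lebesgue_integral)
  show "\<bar>g x\<bar> \<le> K" if "x \<in> space ?P" for x
    unfolding g_def by (rule abs_integral_le_const[OF slice_meas[OF that]]) (use f_bound upd_space that in auto)
  show "\<bar>g x - g (x(i := z'))\<bar> \<le> c" if x: "x \<in> space ?P" and "i < n" and z': "z' \<in> space M" for x i z'
  proof -
    have x': "x(i := z') \<in> space ?P" using that by (auto simp: space_PiM PiE_iff extensional_def)
    have "g x - g (x(i := z')) = (\<integral>z. f (x(n := z)) - f (x(i := z', n := z)) \<partial>M)"
      unfolding g_def
      by (rule Bochner_Integration.integral_diff[symmetric];
          rule integrable_const_bound[where B = K]) (use f_bound upd_space x x' slice_meas in auto)
    also have "\<bar>\<dots>\<bar> \<le> c"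
    proof (rule abs_integral_le_const)
      show "(\<lambda>z. f (x(n := z)) - f (x(i := z', n := z))) \<in> borel_measurable M"
        using slice_meas[OF x] slice_meas[OF x'] by measurable
      fix z assume "z \<in> space M"
      have swap: "x(i := z', n := z) = x(n := z, i := z')" using \<open>i < n\<close> by (auto simp: fun_upd_twist)
      have "\<bar>f (x(n := z)) - f (x(n := z, i := z'))\<bar> \<le> c"
        using f_diff[OF upd_space[OF x \<open>z \<in> space M\<close>] less_SucI[OF \<open>i < n\<close>] z'] .
      then show "\<bar>f (x(n := z)) - f (x(i := z', n := z))\<bar> \<le> c" by (simp only: swap)
    qed
    finally show ?thesis .
  qed
qed

text \<open>The induction integrates out the last coordinate: conditionally on the others,
  \<open>f\<close> has oscillation at most \<open>c\<close>, so Hoeffding's lemma applies.\<close>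

lemma (in prob_space) mcdiarmid_nn_integral_exp:
  fixes f :: "(nat \<Rightarrow> 'a) \<Rightarrow> real"
  assumes "f \<in> borel_measurable (PiM {..<n} (\<lambda>_. M))"
    and "\<And>x. x \<in> space (PiM {..<n} (\<lambda>_. M)) \<Longrightarrow> \<bar>f x\<bar> \<le> K"
    and "\<And>x i z. x \<in> space (PiM {..<n} (\<lambda>_. M)) \<Longrightarrow> i < n \<Longrightarrow> z \<in> space M \<Longrightarrow>
           \<bar>f x - f (x(i := z))\<bar> \<le> c"
    and "l > 0"
  shows "(\<integral>\<^sup>+x. ennreal (exp (l * (f x - (\<integral>y. f y \<partial>PiM {..<n} (\<lambda>_. M))))) \<partial>PiM {..<n} (\<lambda>_. M))
      \<le> ennreal (exp (l\<^sup>2 * real n * c\<^sup>2 / 8))"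
  using assms
proof (induction n arbitrary: f)
  case 0
  let ?P = "PiM ({}::nat set) (\<lambda>_. M)"
  interpret P: prob_space ?P by (rule prob_space_PiM) (simp add: prob_space_axioms)
  define k where "k = f (\<lambda>_. undefined)"
  have f_const: "f x = k" if "x \<in> space ?P" for x
    using that by (simp add: space_PiM k_def)
  then have "(\<integral>y. f y \<partial>?P) = k"
    using P.prob_space by (simp add: Bochner_Integration.integral_cong[OF refl f_const])
  then have "(\<integral>\<^sup>+x. ennreal (exp (l * (f x - (\<integral>y. f y \<partial>?P)))) \<partial>?P) = (\<integral>\<^sup>+x. 1 \<partial>?P)"
    by (intro nn_integral_cong) (simp add: f_const)
  then show ?case by (simp add: P.emeasure_space_1)
next
  case (Suc n)
  let ?P = "PiM {..<n} (\<lambda>_. M)" and ?Q = "PiM (insert n {..<n}) (\<lambda>_. M)"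
  have ins: "{..<Suc n} = insert n {..<n}" by auto
  note f_meas = Suc.prems(1)[unfolded ins] and f_bound = Suc.prems(2)[unfolded ins]
    and f_diff = Suc.prems(3)[unfolded ins]
  define g where "g x = (\<integral>z. f (x(n := z)) \<partial>M)" for x
  note g = integral_last_coordinate[OF f_meas f_bound f_diff, folded g_def]
  interpret product_sigma_finite "\<lambda>_::nat. M"
    by (simp add: product_sigma_finite_def prob_space_imp_sigma_finite prob_space_axioms)
  interpret Q: prob_space ?Q by (rule prob_space_PiM) (simp add: prob_space_axioms)
  have n: "n \<notin> {..<n}" by simp
  define E where "E = (\<integral>y. g y \<partial>?P)"
  have E: "(\<integral>y. f y \<partial>?Q) = E"
    unfolding E_def g_def
    by (rule product_integral_insert[OF _ n], simp, rule Q.integrable_const_bound[where B = K])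
      (use f_bound f_meas in auto)
  have "(\<integral>\<^sup>+x. ennreal (exp (l * (f x - (\<integral>y. f y \<partial>?Q)))) \<partial>?Q)
      = (\<integral>\<^sup>+x. (\<integral>\<^sup>+z. ennreal (exp (l * (f (x(n := z)) - E))) \<partial>M) \<partial>?P)"
    unfolding E by (rule product_nn_integral_insert[OF _ n]) (use f_meas in measurable)
  also have "\<dots> \<le> (\<integral>\<^sup>+x. ennreal (exp (l * (g x - E))) * ennreal (exp (l\<^sup>2 * c\<^sup>2 / 8)) \<partial>?P)"
  proof (rule nn_integral_mono)
    fix x assume x: "x \<in> space ?P"
    have slice_meas: "(\<lambda>z. f (x(n := z))) \<in> borel_measurable M"
      using measurable_comp[OF measurable_component_update[OF x n] f_meas] by (simp add: comp_def)
    have "\<bar>f (x(n := z)) - f (x(n := z'))\<bar> \<le> c" if "z \<in> space M" "z' \<in> space M" for z z'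
      using f_diff[OF measurable_space[OF measurable_component_update[OF x n] that(1)] lessI that(2)]
      by (simp only: fun_upd_upd)
    then show "(\<integral>\<^sup>+z. ennreal (exp (l * (f (x(n := z)) - E))) \<partial>M)
        \<le> ennreal (exp (l * (g x - E))) * ennreal (exp (l\<^sup>2 * c\<^sup>2 / 8))"
      unfolding g_def by (rule Hoeffdings_lemma_oscillation[OF slice_meas _ \<open>l > 0\<close>])
  qed
  also have "\<dots> = (\<integral>\<^sup>+x. ennreal (exp (l * (g x - E))) \<partial>?P) * ennreal (exp (l\<^sup>2 * c\<^sup>2 / 8))"
    by (rule nn_integral_multc) (use g(1) in measurable)
  also have "\<dots> \<le> ennreal (exp (l\<^sup>2 * real n * c\<^sup>2 / 8)) * ennreal (exp (l\<^sup>2 * c\<^sup>2 / 8))"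
    unfolding E_def by (intro mult_right_mono Suc.IH g \<open>l > 0\<close>) auto
  also have "\<dots> = ennreal (exp (l\<^sup>2 * real (Suc n) * c\<^sup>2 / 8))"
  proof -
    have "l\<^sup>2 * real n * c\<^sup>2 / 8 + l\<^sup>2 * c\<^sup>2 / 8 = l\<^sup>2 * real (Suc n) * c\<^sup>2 / 8"
      by (simp add: algebra_simps add_divide_distrib)
    then show ?thesis by (simp add: ennreal_mult[symmetric] flip: exp_add)
  qed
  finally show ?case unfolding ins .
qed

lemma (in prob_space) mcdiarmid_inequality:
  fixes f :: "(nat \<Rightarrow> 'a) \<Rightarrow> real"
  assumes f_meas: "f \<in> borel_measurable (PiM {..<n} (\<lambda>_. M))"
    and f_bound: "\<And>x. x \<in> space (PiM {..<n} (\<lambda>_. M)) \<Longrightarrow> \<bar>f x\<bar> \<le> K"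
    and f_diff: "\<And>x i z. x \<in> space (PiM {..<n} (\<lambda>_. M)) \<Longrightarrow> i < n \<Longrightarrow> z \<in> space M \<Longrightarrow>
           \<bar>f x - f (x(i := z))\<bar> \<le> c"
    and "t > 0" "c > 0" "n > 0"
  shows "measure (PiM {..<n} (\<lambda>_. M))
           {x \<in> space (PiM {..<n} (\<lambda>_. M)). f x - (\<integral>y. f y \<partial>PiM {..<n} (\<lambda>_. M)) \<ge> t}
      \<le> exp (-2 * t\<^sup>2 / (real n * c\<^sup>2))"
proof -
  let ?P = "PiM {..<n} (\<lambda>_. M)"
  interpret P: prob_space ?P by (rule prob_space_PiM) (simp add: prob_space_axioms)
  define E where "E = (\<integral>y. f y \<partial>?P)"
  define l where "l = 4 * t / (real n * c\<^sup>2)"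
  have "l > 0" using assms by (simp add: l_def)
  have "ennreal (measure ?P {x \<in> space ?P. f x - E \<ge> t}) = emeasure ?P {x \<in> space ?P. f x - E \<ge> t}"
    by (simp add: P.emeasure_eq_measure)
  also have "\<dots> \<le> ennreal (exp (-l * t)) * (\<integral>\<^sup>+x. ennreal (exp (l * (f x - E))) * indicator (space ?P) x \<partial>?P)"
    by (rule Chernoff_ineq_nn_integral_ge[OF \<open>l > 0\<close>]) (use f_meas in auto)
  also have "(\<integral>\<^sup>+x. ennreal (exp (l * (f x - E))) * indicator (space ?P) x \<partial>?P)
      = (\<integral>\<^sup>+x. ennreal (exp (l * (f x - E))) \<partial>?P)"
    by (rule nn_integral_cong) simp
  also have "ennreal (exp (-l * t)) * \<dots> \<le> ennreal (exp (-l * t)) * ennreal (exp (l\<^sup>2 * real n * c\<^sup>2 / 8))"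
    unfolding E_def by (rule mult_left_mono[OF mcdiarmid_nn_integral_exp[OF f_meas f_bound f_diff \<open>l > 0\<close>] zero_le])
  also have "\<dots> = ennreal (exp (-2 * t\<^sup>2 / (real n * c\<^sup>2)))"
  proof -
    have "-l * t + l\<^sup>2 * real n * c\<^sup>2 / 8 = -2 * t\<^sup>2 / (real n * c\<^sup>2)"
      using assms unfolding l_def by (simp add: field_simps power2_eq_square)
    then show ?thesis by (simp add: ennreal_mult[symmetric] flip: exp_add)
  qed
  finally show ?thesis unfolding E_def by (subst (asm) ennreal_le_iff) auto
qed

section \<open>Uniform deviation of a bounded function class\<close>

lemma bdd_above_image_abs_le:
  fixes f :: "'w \<Rightarrow> real"
  shows "(\<And>w. w \<in> C \<Longrightarrow> \<bar>f w\<bar> \<le> K) \<Longrightarrow> bdd_above (f ` C)"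
  by (rule bdd_aboveI2[where M = K]) (simp add: abs_le_iff)

lemma abs_SUP_le:
  fixes f :: "'w \<Rightarrow> real"
  assumes "C \<noteq> {}" and bound: "\<And>w. w \<in> C \<Longrightarrow> \<bar>f w\<bar> \<le> K"
  shows "\<bar>SUP w\<in>C. f w\<bar> \<le> K"
proof -
  obtain w0 where "w0 \<in> C" using assms(1) by blast
  have "(SUP w\<in>C. f w) \<le> K" using assms by (intro cSUP_least) (auto simp: abs_le_iff)
  moreover have "f w0 \<le> (SUP w\<in>C. f w)"
    using \<open>w0 \<in> C\<close> bdd_above_image_abs_le[OF bound] by (rule cSUP_upper)
  ultimately show ?thesis using bound[OF \<open>w0 \<in> C\<close>] by linarith
qed

lemma abs_SUP_diff_le:
  fixes f g :: "'w \<Rightarrow> real"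
  assumes "C \<noteq> {}" "bdd_above (f ` C)" "bdd_above (g ` C)"
    and diff: "\<And>w. w \<in> C \<Longrightarrow> \<bar>f w - g w\<bar> \<le> k"
  shows "\<bar>(SUP w\<in>C. f w) - (SUP w\<in>C. g w)\<bar> \<le> k"
proof -
  have "f w \<le> (SUP w\<in>C. g w) + k" "g w \<le> (SUP w\<in>C. f w) + k" if "w \<in> C" for w
    using cSUP_upper[OF that assms(2)] cSUP_upper[OF that assms(3)] diff[OF that] by linarith+
  then have "(SUP w\<in>C. f w) \<le> (SUP w\<in>C. g w) + k" "(SUP w\<in>C. g w) \<le> (SUP w\<in>C. f w) + k"
    using assms(1) by (auto intro: cSUP_least)
  then show ?thesis by linarith
qed

lemma borel_measurable_SUP_bounded:
  fixes g :: "'w \<Rightarrow> 'a \<Rightarrow> real"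
  assumes "countable C" and "\<And>w. w \<in> C \<Longrightarrow> g w \<in> borel_measurable M"
    and "\<And>w x. w \<in> C \<Longrightarrow> x \<in> space M \<Longrightarrow> \<bar>g w x\<bar> \<le> K"
  shows "(\<lambda>x. SUP w\<in>C. g w x) \<in> borel_measurable M"
  using assms by (intro borel_measurable_cSUP bdd_above_image_abs_le) auto

lemma abs_sum_lessThan_le:
  fixes g :: "nat \<Rightarrow> real"
  assumes "\<And>i. i < N \<Longrightarrow> \<bar>g i\<bar> \<le> K"
  shows "\<bar>\<Sum>i<N. g i\<bar> \<le> real N * K"
proof -
  have "\<bar>\<Sum>i<N. g i\<bar> \<le> (\<Sum>i<N. \<bar>g i\<bar>)" by (rule sum_abs)
  also have "\<dots> \<le> (\<Sum>i<N. K)" by (rule sum_mono) (use assms in auto)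
  finally show ?thesis by simp
qed

lemma space_PiM_component: "\<omega> \<in> space (PiM I (\<lambda>_. M)) \<Longrightarrow> i \<in> I \<Longrightarrow> \<omega> i \<in> space M"
  by (auto simp: space_PiM PiE_iff)

lemma (in prob_space) integral_PiM_reindex:
  fixes F :: "(nat \<Rightarrow> 'a) \<Rightarrow> real"
  assumes "bij_betw \<pi> I I" and F: "F \<in> borel_measurable (PiM I (\<lambda>_. M))"
  shows "(\<integral>\<omega>. F (\<lambda>i\<in>I. \<omega> (\<pi> i)) \<partial>PiM I (\<lambda>_. M)) = (\<integral>\<omega>. F \<omega> \<partial>PiM I (\<lambda>_. M))"
proof -
  let ?P = "PiM I (\<lambda>_. M)"
  have \<pi>: "inj_on \<pi> I" "\<pi> \<in> I \<rightarrow> I" using assms(1) by (auto simp: bij_betw_def)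
  have reindex: "(\<lambda>\<omega>. \<lambda>i\<in>I. \<omega> (\<pi> i)) \<in> measurable ?P ?P"
    using \<pi> by (intro measurable_restrict measurable_component_singleton) auto
  have "distr ?P ?P (\<lambda>\<omega>. \<lambda>i\<in>I. \<omega> (\<pi> i)) = ?P"
    using distr_PiM_reindex[of I "\<lambda>_. M" \<pi> I] \<pi> prob_space_axioms by simp
  then show ?thesis using integral_distr[OF reindex F] by simp
qed

lemma (in prob_space) integral_PiM_component:
  fixes g :: "'a \<Rightarrow> real"
  assumes "i \<in> I" "g \<in> borel_measurable M"
  shows "(\<integral>\<omega>. g (\<omega> i) \<partial>PiM I (\<lambda>_. M)) = (\<integral>z. g z \<partial>M)"
proof -
  have "distr (PiM I (\<lambda>_. M)) M (\<lambda>\<omega>. \<omega> i) = M"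
    by (rule distr_PiM_component) (use assms prob_space_axioms in auto)
  then show ?thesis using integral_distr[of "\<lambda>\<omega>. \<omega> i" "PiM I (\<lambda>_. M)" M g] assms by simp
qed

definition swap_by_signs :: "nat \<Rightarrow> (nat \<Rightarrow> real) \<Rightarrow> nat \<Rightarrow> nat" where
  "swap_by_signs N \<sigma> j = (if j < N \<and> \<sigma> j = -1 then j + N
      else if N \<le> j \<and> j < N + N \<and> \<sigma> (j - N) = -1 then j - N else j)"

lemma bij_betw_swap_by_signs: "bij_betw (swap_by_signs N \<sigma>) {..<N + N} {..<N + N}"
  by (rule bij_betwI[where g = "swap_by_signs N \<sigma>"]) (auto simp: swap_by_signs_def)

text \<open>In \<open>ghost_deviation\<close> the coordinates \<open>N ..< N + N\<close> of the sample carry an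
  independent ghost sample.\<close>

locale bounded_function_class =
  fixes D :: "'z measure" and C :: "'w set" and h :: "'w \<Rightarrow> 'z \<Rightarrow> real" and c :: real
  assumes prob_space_D: "prob_space D"
    and countable_C: "countable C" and C_nonempty: "C \<noteq> {}"
    and measurable_h: "\<And>w. w \<in> C \<Longrightarrow> h w \<in> borel_measurable D"
    and bounded_h: "\<And>w z. w \<in> C \<Longrightarrow> z \<in> space D \<Longrightarrow> \<bar>h w z\<bar> \<le> c"
begin

abbreviation samples :: "nat set \<Rightarrow> (nat \<Rightarrow> 'z) measure" where
  "samples I \<equiv> PiM I (\<lambda>_. D)"

definition sup_deviation :: "nat \<Rightarrow> (nat \<Rightarrow> 'z) \<Rightarrow> real" where
  "sup_deviation N S = (SUP w\<in>C. \<Sum>i<N. (\<integral>z. h w z \<partial>D) - h w (S i))"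

definition ghost_deviation :: "nat \<Rightarrow> (nat \<Rightarrow> real) \<Rightarrow> (nat \<Rightarrow> 'z) \<Rightarrow> real" where
  "ghost_deviation N \<sigma> \<omega> = (SUP w\<in>C. \<Sum>i<N. \<sigma> i * (h w (\<omega> (N + i)) - h w (\<omega> i)))"

lemma prob_space_samples: "prob_space (samples I)"
  by (rule prob_space_PiM) (simp add: prob_space_D)

lemma abs_integral_h_le: "w \<in> C \<Longrightarrow> \<bar>\<integral>z. h w z \<partial>D\<bar> \<le> c"
  by (rule prob_space.abs_integral_le_const[OF prob_space_D measurable_h bounded_h])

lemma abs_deviation_le:
  "w \<in> C \<Longrightarrow> (\<And>i. i < N \<Longrightarrow> S i \<in> space D) \<Longrightarrow>
    \<bar>\<Sum>i<N. (\<integral>z. h w z \<partial>D) - h w (S i)\<bar> \<le> real N * (2 * c)"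
  using abs_integral_h_le bounded_h by (intro abs_sum_lessThan_le) (smt (verit))

lemma abs_ghost_term_le:
  assumes "\<sigma> \<in> sign_vectors N" "w \<in> C" "\<And>i. i < N + N \<Longrightarrow> \<omega> i \<in> space D"
  shows "\<bar>\<Sum>i<N. \<sigma> i * (h w (\<omega> (N + i)) - h w (\<omega> i))\<bar> \<le> real N * (2 * c)"
proof (rule abs_sum_lessThan_le)
  fix i assume "i < N"
  then have "\<bar>h w (\<omega> (N + i))\<bar> \<le> c" "\<bar>h w (\<omega> i)\<bar> \<le> c"
    using bounded_h[OF assms(2)] assms(3) by auto
  then show "\<bar>\<sigma> i * (h w (\<omega> (N + i)) - h w (\<omega> i))\<bar> \<le> 2 * c"
    using abs_sign_vectors[OF assms(1) \<open>i < N\<close>] by (auto simp: abs_mult abs_le_iff)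
qed

lemma sup_deviation_measurable: "sup_deviation N \<in> borel_measurable (samples {..<N})"
  unfolding sup_deviation_def
  by (rule borel_measurable_SUP_bounded[OF countable_C _ abs_deviation_le])
    (auto intro!: borel_measurable_sum borel_measurable_diff measurable_compose[OF _ measurable_h]
      intro: space_PiM_component)

lemma abs_sup_deviation_le: "S \<in> space (samples {..<N}) \<Longrightarrow> \<bar>sup_deviation N S\<bar> \<le> real N * (2 * c)"
  unfolding sup_deviation_def
  by (intro abs_SUP_le[OF C_nonempty] abs_deviation_le) (auto intro: space_PiM_component)

lemma sup_deviation_bounded_difference:
  assumes S: "S \<in> space (samples {..<N})" and "i < N" and z: "z \<in> space D"
  shows "\<bar>sup_deviation N S - sup_deviation N (S(i := z))\<bar> \<le> 2 * c"
  unfolding sup_deviation_def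
proof (rule abs_SUP_diff_le[OF C_nonempty])
  have S': "S(i := z) \<in> space (samples {..<N})"
    using S z \<open>i < N\<close> by (auto simp: space_PiM PiE_iff extensional_def)
  have bdd: "bdd_above ((\<lambda>w. \<Sum>j<N. (\<integral>z. h w z \<partial>D) - h w (S' j)) ` C)"
    if "S' \<in> space (samples {..<N})" for S'
    using that by (intro bdd_above_image_abs_le[where K = "real N * (2 * c)"] abs_deviation_le) (auto intro: space_PiM_component)
  show "bdd_above ((\<lambda>w. \<Sum>j<N. (\<integral>z. h w z \<partial>D) - h w (S j)) ` C)"
    "bdd_above ((\<lambda>w. \<Sum>j<N. (\<integral>z. h w z \<partial>D) - h w ((S(i := z)) j)) ` C)"
    using bdd[OF S] bdd[OF S'] .
  fix w assume "w \<in> C"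
  have "(\<Sum>j<N. (\<integral>z. h w z \<partial>D) - h w (S j)) - (\<Sum>j<N. (\<integral>z. h w z \<partial>D) - h w ((S(i := z)) j))
      = (\<Sum>j<N. if j = i then h w z - h w (S i) else 0)"
    unfolding sum_subtractf[symmetric] by (rule sum.cong) auto
  also have "\<dots> = h w z - h w (S i)" using \<open>i < N\<close> by simp
  finally show "\<bar>(\<Sum>j<N. (\<integral>z. h w z \<partial>D) - h w (S j)) - (\<Sum>j<N. (\<integral>z. h w z \<partial>D) - h w ((S(i := z)) j))\<bar> \<le> 2 * c"
    using bounded_h[OF \<open>w \<in> C\<close> z] bounded_h[OF \<open>w \<in> C\<close> space_PiM_component[OF S, of i]] \<open>i < N\<close> by simp
qed

lemma ghost_deviation_measurable:
  "\<sigma> \<in> sign_vectors N \<Longrightarrow> ghost_deviation N \<sigma> \<in> borel_measurable (samples {..<N + N})"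
  unfolding ghost_deviation_def
  by (rule borel_measurable_SUP_bounded[OF countable_C _ abs_ghost_term_le])
    (auto intro!: borel_measurable_sum borel_measurable_times borel_measurable_diff
      measurable_compose[OF _ measurable_h] intro: space_PiM_component)

lemma abs_ghost_deviation_le:
  "\<sigma> \<in> sign_vectors N \<Longrightarrow> \<omega> \<in> space (samples {..<N + N}) \<Longrightarrow> \<bar>ghost_deviation N \<sigma> \<omega>\<bar> \<le> real N * (2 * c)"
  unfolding ghost_deviation_def
  by (intro abs_SUP_le[OF C_nonempty] abs_ghost_term_le) (auto intro: space_PiM_component)

lemma integrable_ghost_deviation:
  assumes "\<sigma> \<in> sign_vectors N"
  shows "integrable (samples {..<N + N}) (ghost_deviation N \<sigma>)"
proof -
  interpret prob_space "samples {..<N + N}" by (rule prob_space_samples)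
  show ?thesis
    by (rule integrable_const_bound[where B = "real N * (2 * c)"])
      (use assms in \<open>auto intro: ghost_deviation_measurable abs_ghost_deviation_le\<close>)
qed

text \<open>Swapping sample and ghost points is measure preserving, so the law of the
  symmetrised deviation does not depend on the signs.\<close>

lemma integral_ghost_deviation_sign_invariant:
  assumes \<sigma>: "\<sigma> \<in> sign_vectors N"
  shows "(\<integral>\<omega>. ghost_deviation N \<sigma> \<omega> \<partial>samples {..<N + N})
       = (\<integral>\<omega>. ghost_deviation N (\<lambda>i\<in>{..<N}. 1) \<omega> \<partial>samples {..<N + N})"
proof -
  let ?\<pi> = "swap_by_signs N \<sigma>"
  have "ghost_deviation N (\<lambda>i\<in>{..<N}. 1) (\<lambda>j\<in>{..<N + N}. \<omega> (?\<pi> j)) = ghost_deviation N \<sigma> \<omega>" for \<omega>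
    unfolding ghost_deviation_def
  proof (intro SUP_cong refl sum.cong)
    fix w i assume "i \<in> {..<N}"
    then show "(\<lambda>i\<in>{..<N}. 1) i * (h w ((\<lambda>j\<in>{..<N + N}. \<omega> (?\<pi> j)) (N + i)) - h w ((\<lambda>j\<in>{..<N + N}. \<omega> (?\<pi> j)) i))
        = \<sigma> i * (h w (\<omega> (N + i)) - h w (\<omega> i))"
      using sign_vectors_cases[OF \<sigma>, of i] by (auto simp: swap_by_signs_def add.commute)
  qed
  then show ?thesis
    using prob_space.integral_PiM_reindex[OF prob_space_D bij_betw_swap_by_signs[of N \<sigma>]
        ghost_deviation_measurable[OF ones_in_sign_vectors, of N]] by simp
qed

lemma ghost_deviation_merge_measurable:
  "(\<lambda>(x, y). ghost_deviation N (\<lambda>i\<in>{..<N}. 1) (merge {..<N} {N..<N + N} (x, y)))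
     \<in> borel_measurable (samples {..<N} \<Otimes>\<^sub>M samples {N..<N + N})"
proof -
  have IJ: "{..<N} \<union> {N..<N + N} = {..<N + N}" by auto
  show ?thesis
    using measurable_comp[OF measurable_merge[of "{..<N}" "{N..<N + N}" "\<lambda>_. D", unfolded IJ]
        ghost_deviation_measurable[OF ones_in_sign_vectors, of N]]
    by (simp add: comp_def case_prod_beta')
qed

lemma merge_in_space_samples:
  assumes "x \<in> space (samples {..<N})" "y \<in> space (samples {N..<N + N})"
  shows "merge {..<N} {N..<N + N} (x, y) \<in> space (samples {..<N + N})"
proof -
  have IJ: "{..<N} \<union> {N..<N + N} = {..<N + N}" by auto
  show ?thesis
    using measurable_space[OF measurable_merge[of "{..<N}" "{N..<N + N}" "\<lambda>_. D", unfolded IJ], of "(x, y)"]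
      assms by (simp add: space_pair_measure)
qed

text \<open>Replacing the true mean by the empirical mean of a ghost sample can only
  increase the worst-case deviation on average (Jensen for the supremum).\<close>

lemma sup_deviation_le_integral_ghost:
  assumes x: "x \<in> space (samples {..<N})"
  shows "sup_deviation N x
    \<le> (\<integral>y. ghost_deviation N (\<lambda>i\<in>{..<N}. 1) (merge {..<N} {N..<N + N} (x, y)) \<partial>samples {N..<N + N})"
    (is "_ \<le> (\<integral>y. ?H y \<partial>samples ?J)")
  unfolding sup_deviation_def
proof (rule cSUP_least[OF C_nonempty])
  interpret J: prob_space "samples ?J" by (rule prob_space_samples)
  fix w assume w: "w \<in> C"
  have integrable: "integrable (samples ?J) (\<lambda>y. h w (y (N + i)))" if "i < N" for i
  proof (rule J.integrable_const_bound[where B = c])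
    show "AE y in samples ?J. norm (h w (y (N + i))) \<le> c"
      using that bounded_h[OF w] by (intro AE_I2) (simp add: space_PiM_component)
    show "(\<lambda>y. h w (y (N + i))) \<in> borel_measurable (samples ?J)"
      using measurable_compose[OF measurable_component_singleton[of "N + i" ?J "\<lambda>_. D"] measurable_h[OF w]] that
      by simp
  qed
  have "(\<Sum>i<N. (\<integral>z. h w z \<partial>D) - h w (x i)) = (\<Sum>i<N. \<integral>y. h w (y (N + i)) - h w (x i) \<partial>samples ?J)"
    using integrable
    by (intro sum.cong refl)
      (simp add: prob_space.integral_PiM_component[OF prob_space_D _ measurable_h[OF w]] J.prob_space)
  also have "\<dots> = (\<integral>y. (\<Sum>i<N. h w (y (N + i)) - h w (x i)) \<partial>samples ?J)"
    by (rule Bochner_Integration.integral_sum[symmetric]) (use integrable in auto)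
  also have "\<dots> \<le> (\<integral>y. ?H y \<partial>samples ?J)"
  proof (rule integral_mono)
    show "integrable (samples ?J) (\<lambda>y. \<Sum>i<N. h w (y (N + i)) - h w (x i))"
      using integrable by auto
    show "integrable (samples ?J) ?H"
      by (rule J.integrable_const_bound[where B = "real N * (2 * c)"])
        (use x merge_in_space_samples abs_ghost_deviation_le[OF ones_in_sign_vectors]
           measurable_Pair2[OF ghost_deviation_merge_measurable x] in auto)
    fix y assume y: "y \<in> space (samples ?J)"
    have "(\<Sum>i<N. h w (y (N + i)) - h w (x i))
        = (\<Sum>i<N. (\<lambda>i\<in>{..<N}. 1) i * (h w (merge {..<N} ?J (x, y) (N + i)) - h w (merge {..<N} ?J (x, y) i)))"
      by (rule sum.cong) (auto simp: merge_def)
    also have "\<dots> \<le> ?H y"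
      unfolding ghost_deviation_def
      by (rule cSUP_upper[OF w], rule bdd_above_image_abs_le, rule abs_ghost_term_le[OF ones_in_sign_vectors])
        (use merge_in_space_samples[OF x y] in \<open>auto intro: space_PiM_component\<close>)
    finally show "(\<Sum>i<N. h w (y (N + i)) - h w (x i)) \<le> ?H y" .
  qed
  finally show "(\<Sum>i<N. (\<integral>z. h w z \<partial>D) - h w (x i)) \<le> (\<integral>y. ?H y \<partial>samples ?J)" .
qed

lemma integral_sup_deviation_le_ghost:
  "(\<integral>S. sup_deviation N S \<partial>samples {..<N})
     \<le> (\<integral>\<omega>. ghost_deviation N (\<lambda>i\<in>{..<N}. 1) \<omega> \<partial>samples {..<N + N})"
proof -
  let ?I = "{..<N}" and ?J = "{N..<N + N}"
  let ?H = "ghost_deviation N (\<lambda>i\<in>{..<N}. 1)"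
  interpret product_sigma_finite "\<lambda>_::nat. D"
    by (simp add: product_sigma_finite_def prob_space_imp_sigma_finite prob_space_D)
  interpret I: prob_space "samples ?I" by (rule prob_space_samples)
  interpret J: prob_space "samples ?J" by (rule prob_space_samples)
  have IJ: "?I \<union> ?J = {..<N + N}" by auto
  have "(\<integral>S. sup_deviation N S \<partial>samples ?I) \<le> (\<integral>x. (\<integral>y. ?H (merge ?I ?J (x, y)) \<partial>samples ?J) \<partial>samples ?I)"
  proof (rule integral_mono[OF _ _ sup_deviation_le_integral_ghost])
    show "integrable (samples ?I) (sup_deviation N)"
      by (rule I.integrable_const_bound[where B = "real N * (2 * c)"])
        (auto intro: sup_deviation_measurable abs_sup_deviation_le)
    show "integrable (samples ?I) (\<lambda>x. \<integral>y. ?H (merge ?I ?J (x, y)) \<partial>samples ?J)"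
      by (rule I.integrable_const_bound[where B = "real N * (2 * c)"])
        (use J.borel_measurable_lebesgue_integral[OF ghost_deviation_merge_measurable]
           merge_in_space_samples abs_ghost_deviation_le[OF ones_in_sign_vectors]
           measurable_Pair2[OF ghost_deviation_merge_measurable]
         in \<open>auto intro!: J.abs_integral_le_const\<close>)
  qed
  also have "\<dots> = (\<integral>\<omega>. ?H \<omega> \<partial>samples (?I \<union> ?J))"
    by (rule product_integral_fold[symmetric]) (auto simp: IJ intro: integrable_ghost_deviation[OF ones_in_sign_vectors])
  finally show ?thesis unfolding IJ .
qed

lemma sum_ghost_deviation_le:
  assumes rademacher: "\<And>S s. (\<And>i. i < N \<Longrightarrow> S i \<in> space D) \<Longrightarrow> s = -1 \<or> s = 1 \<Longrightarrow>
      (\<Sum>\<sigma>\<in>sign_vectors N. SUP w\<in>C. \<Sum>i<N. \<sigma> i * (s * h w (S i))) \<le> 2 ^ N * R"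
    and \<omega>: "\<omega> \<in> space (samples {..<N + N})"
  shows "(\<Sum>\<sigma>\<in>sign_vectors N. ghost_deviation N \<sigma> \<omega>) \<le> 2 ^ N * (2 * R)"
proof -
  define ghost where "ghost \<sigma> = (SUP w\<in>C. \<Sum>i<N. \<sigma> i * (1 * h w (\<omega> (N + i))))" for \<sigma>
  define sample where "sample \<sigma> = (SUP w\<in>C. \<Sum>i<N. \<sigma> i * (-1 * h w (\<omega> i)))" for \<sigma>
  have space: "\<omega> (N + i) \<in> space D" "\<omega> i \<in> space D" if "i < N" for i
    using that \<omega> by (auto intro: space_PiM_component)
  have "ghost_deviation N \<sigma> \<omega> \<le> ghost \<sigma> + sample \<sigma>" if \<sigma>: "\<sigma> \<in> sign_vectors N" for \<sigma>
    unfolding ghost_deviation_def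
  proof (rule cSUP_least[OF C_nonempty])
    fix w assume "w \<in> C"
    have "(\<Sum>i<N. \<sigma> i * (h w (\<omega> (N + i)) - h w (\<omega> i)))
        = (\<Sum>i<N. \<sigma> i * (1 * h w (\<omega> (N + i)))) + (\<Sum>i<N. \<sigma> i * (-1 * h w (\<omega> i)))"
      by (simp add: sum.distrib[symmetric] algebra_simps)
    also have "\<dots> \<le> ghost \<sigma> + sample \<sigma>"
      unfolding ghost_def sample_def
      by (intro add_mono cSUP_upper \<open>w \<in> C\<close> bdd_above_signed_sum[OF \<sigma>, where K = c])
        (use bounded_h space in auto)
    finally show "(\<Sum>i<N. \<sigma> i * (h w (\<omega> (N + i)) - h w (\<omega> i))) \<le> ghost \<sigma> + sample \<sigma>" .
  qed
  then have "(\<Sum>\<sigma>\<in>sign_vectors N. ghost_deviation N \<sigma> \<omega>)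
      \<le> (\<Sum>\<sigma>\<in>sign_vectors N. ghost \<sigma>) + (\<Sum>\<sigma>\<in>sign_vectors N. sample \<sigma>)"
    by (simp add: sum.distrib[symmetric] sum_mono)
  also have "\<dots> \<le> 2 ^ N * R + 2 ^ N * R"
    unfolding ghost_def sample_def by (intro add_mono rademacher) (use space in auto)
  finally show ?thesis by (simp add: mult_ac)
qed

lemma integral_sup_deviation_le_rademacher:
  assumes rademacher: "\<And>S s. (\<And>i. i < N \<Longrightarrow> S i \<in> space D) \<Longrightarrow> s = -1 \<or> s = 1 \<Longrightarrow>
      (\<Sum>\<sigma>\<in>sign_vectors N. SUP w\<in>C. \<Sum>i<N. \<sigma> i * (s * h w (S i))) \<le> 2 ^ N * R"
  shows "(\<integral>S. sup_deviation N S \<partial>samples {..<N}) \<le> 2 * R"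
proof -
  let ?P = "samples {..<N + N}"
  interpret P: prob_space ?P by (rule prob_space_samples)
  have "2 ^ N * (\<integral>\<omega>. ghost_deviation N (\<lambda>i\<in>{..<N}. 1) \<omega> \<partial>?P)
      = (\<Sum>\<sigma>\<in>sign_vectors N. \<integral>\<omega>. ghost_deviation N \<sigma> \<omega> \<partial>?P)"
    by (simp add: integral_ghost_deviation_sign_invariant card_sign_vectors)
  also have "\<dots> = (\<integral>\<omega>. (\<Sum>\<sigma>\<in>sign_vectors N. ghost_deviation N \<sigma> \<omega>) \<partial>?P)"
    by (rule Bochner_Integration.integral_sum[symmetric]) (simp add: integrable_ghost_deviation)
  also have "\<dots> \<le> (\<integral>\<omega>. 2 ^ N * (2 * R) \<partial>?P)"
    by (intro integral_mono Bochner_Integration.integrable_sum integrable_ghost_deviation)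
      (auto intro: sum_ghost_deviation_le[OF rademacher])
  finally have "(\<integral>\<omega>. ghost_deviation N (\<lambda>i\<in>{..<N}. 1) \<omega> \<partial>?P) \<le> 2 * R"
    by (simp add: P.prob_space)
  then show ?thesis using integral_sup_deviation_le_ghost[of N] by linarith
qed

lemma c_nonneg: "0 \<le> c"
proof -
  obtain w z where "w \<in> C" "z \<in> space D"
    using C_nonempty prob_space.not_empty[OF prob_space_D] by blast
  then show ?thesis using bounded_h[of w z] by linarith
qed

lemma sup_deviation_concentration:
  assumes "0 < \<delta>" "\<delta> < 1" "0 < N"
  shows "measure (samples {..<N})
           {S \<in> space (samples {..<N}). sup_deviation N S - (\<integral>S. sup_deviation N S \<partial>samples {..<N})
              > real N * (c * sqrt (2 * ln (2 / \<delta>) / real N))} \<le> \<delta> / 2"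
    (is "measure ?P ?B \<le> _")
proof (cases "c = 0")
  case True
  interpret P: prob_space ?P by (rule prob_space_samples)
  have zero: "sup_deviation N S = 0" if "S \<in> space ?P" for S
    using abs_sup_deviation_le[OF that] True by simp
  then have "(\<integral>S. sup_deviation N S \<partial>?P) = (\<integral>S. 0 \<partial>?P)"
    by (rule Bochner_Integration.integral_cong[OF refl])
  then have "?B = {}" using zero True by auto
  then have "measure ?P ?B = 0" by (simp only: measure_empty)
  then show ?thesis using \<open>0 < \<delta>\<close> by simp
next
  case False
  interpret P: prob_space ?P by (rule prob_space_samples)
  have "c > 0" using False c_nonneg by simp
  define t where "t = real N * (c * sqrt (2 * ln (2 / \<delta>) / real N))"
  have "ln (2 / \<delta>) > 0" using assms by (simp add: ln_gt_zero_iff)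
  then have "t > 0" using \<open>c > 0\<close> \<open>0 < N\<close> by (simp add: t_def)
  have "measure ?P ?B \<le> measure ?P {S \<in> space ?P. sup_deviation N S - (\<integral>S. sup_deviation N S \<partial>?P) \<ge> t}"
    unfolding t_def
    by (rule P.finite_measure_mono, force) (use sup_deviation_measurable[of N] in measurable)
  also have "\<dots> \<le> exp (-2 * t\<^sup>2 / (real N * (2 * c)\<^sup>2))"
    by (rule prob_space.mcdiarmid_inequality[OF prob_space_D sup_deviation_measurable
          abs_sup_deviation_le sup_deviation_bounded_difference])
      (use \<open>t > 0\<close> \<open>c > 0\<close> \<open>0 < N\<close> in auto)
  also have "-2 * t\<^sup>2 / (real N * (2 * c)\<^sup>2) = - ln (2 / \<delta>)"
    using \<open>c > 0\<close> \<open>0 < N\<close> \<open>ln (2 / \<delta>) > 0\<close>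
    by (simp add: t_def power_mult_distrib field_simps power2_eq_square)
  finally show ?thesis using \<open>0 < \<delta>\<close> by (simp add: exp_minus)
qed

end

section \<open>The matrix loss class\<close>

definition vform :: "real^'n^'n \<Rightarrow> real^'n^'m \<Rightarrow> real^'n^'m \<Rightarrow> real" where
  "vform V W X = inner (innerH W X) (Vnormalized V)"

lemma vform_explicit:
  "vform V W X = (\<Sum>i\<in>UNIV. \<Sum>j\<in>UNIV. (\<Sum>k\<in>UNIV. W $ k $ i * X $ k $ j) * Vnormalized V $ i $ j)"
  unfolding vform_def innerH_def inner_vec_def matrix_matrix_mult_def transpose_def by simp

lemma bilinear_vform: "bilinear (vform V)"
proof -
  have "linear (\<lambda>X. vform V W X)" for W
    by (rule linearI)
      (simp_all add: vform_explicit distrib_left distrib_right sum.distrib sum_distrib_left sum_distrib_right mult_ac)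
  moreover have "linear (\<lambda>W. vform V W X)" for X
    by (rule linearI)
      (simp_all add: vform_explicit distrib_left distrib_right sum.distrib sum_distrib_left sum_distrib_right mult_ac)
  ultimately show ?thesis unfolding bilinear_def by blast
qed

lemma vform_commute:
  assumes "transpose V = V"
  shows "vform V W X = vform V X W"
proof -
  have "Vnormalized V $ i $ j = Vnormalized V $ j $ i" for i j
    using assms unfolding Vnormalized_def by (metis transpose_def vec_lambda_beta scaleR_vec_def)
  then show ?thesis unfolding vform_explicit by (subst sum.swap) (simp add: mult_ac)
qed

lemma normHV_nonneg: "0 \<le> inner (innerH X X) (Vnormalized V) \<Longrightarrow> 0 \<le> normHV V X"
  unfolding normHV_def by simp

lemma normHV_vform: "normHV V X = sqrt (vform V X X)"
  unfolding normHV_def vform_def ..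

lemma lossV_vform: "lossV \<Phi> V W p = \<Phi> (vform V W (fst p)) (snd p)"
  unfolding lossV_def vform_def ..

lemma continuous_on_vform:
  "continuous_on S f \<Longrightarrow> continuous_on S g \<Longrightarrow> continuous_on S (\<lambda>x. vform V (f x) (g x))"
  for f g :: "'a::t2_space \<Rightarrow> real^'n^'m"
  using bilinear_continuous_on_compose[OF _ _ bilinear_vform] by blast

locale lipschitz_loss_setting =
  fixes V :: "real^'n^'n" and D :: "((real^'n^'m) \<times> 'y) measure" and Y :: "'y measure"
    and \<Phi> :: "real \<Rightarrow> 'y \<Rightarrow> real" and R B \<rho> c :: real
  assumes symmetric_V: "transpose V = V"
    and psd_V: "\<forall>X::real^'n^'m. inner (innerH X X) (Vnormalized V) \<ge> 0"
    and prob_space_D: "prob_space D" and sets_D: "sets D = sets (borel \<Otimes>\<^sub>M Y)"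
    and AE_norm_le: "AE p in D. normHV V (fst p) \<le> R"
    and measurable_\<Phi>: "(\<lambda>(a, y). \<Phi> a y) \<in> borel_measurable (borel \<Otimes>\<^sub>M Y)"
    and lipschitz_\<Phi>: "\<forall>y\<in>space Y. lipschitz_on \<rho> UNIV (\<lambda>a. \<Phi> a y)"
    and bounded_\<Phi>: "\<forall>y\<in>space Y. \<forall>a\<in>{-(B * R)..B * R}. \<bar>\<Phi> a y\<bar> \<le> c"
    and B_nonneg: "0 \<le> B"
begin

sublocale H: psd_bilinear "vform V :: real^'n^'m \<Rightarrow> _"
  using bilinear_vform vform_commute[OF symmetric_V] psd_V by unfold_locales (auto simp: vform_def)

lemma normHV_eq_seminorm: "normHV V = H.seminorm"
  unfolding normHV_vform[abs_def] H.seminorm_def ..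

lemma R_nonneg: "0 \<le> R"
proof -
  interpret prob_space D by (rule prob_space_D)
  have "AE p in D. 0 \<le> R"
    using AE_norm_le by eventually_elim (metis H.seminorm_nonneg normHV_eq_seminorm order_trans)
  then show ?thesis by simp
qed

lemma space_D: "space D = UNIV \<times> space Y"
  using sets_eq_imp_space_eq[OF sets_D] by (simp add: space_pair_measure)

lemma space_Y_nonempty: "space Y \<noteq> {}"
  using prob_space.not_empty[OF prob_space_D] space_D by auto

lemma \<rho>_nonneg: "0 \<le> \<rho>"
  using space_Y_nonempty lipschitz_\<Phi> lipschitz_on_nonneg by blast

lemma abs_\<Phi>_diff_le: "y \<in> space Y \<Longrightarrow> \<bar>\<Phi> a y - \<Phi> a' y\<bar> \<le> \<rho> * \<bar>a - a'\<bar>"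
  using lipschitz_onD[of \<rho> UNIV "\<lambda>a. \<Phi> a y" a a'] lipschitz_\<Phi> by (auto simp: dist_real_def)

lemma abs_vform_le: "H.seminorm W \<le> B \<Longrightarrow> H.seminorm X \<le> R \<Longrightarrow> \<bar>vform V W X\<bar> \<le> B * R"
  using H.cauchy_schwarz[of W X] mult_mono[of "H.seminorm W" B "H.seminorm X" R]
    H.seminorm_nonneg[of W] H.seminorm_nonneg[of X] B_nonneg by linarith

text \<open>Cutting off sample points outside the almost-sure bound \<open>R\<close> makes the loss
  bounded and Lipschitz in \<open>W\<close> everywhere, without changing it almost surely.\<close>

definition truncated_loss :: "real^'n^'m \<Rightarrow> (real^'n^'m) \<times> 'y \<Rightarrow> real" where
  "truncated_loss W z = (if H.seminorm (fst z) \<le> R then lossV \<Phi> V W z else 0)"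

lemma abs_truncated_loss_le:
  assumes "H.seminorm W \<le> B" "z \<in> space D"
  shows "\<bar>truncated_loss W z\<bar> \<le> c"
proof (cases "H.seminorm (fst z) \<le> R")
  case True
  then have "vform V W (fst z) \<in> {-(B * R)..B * R}" using abs_vform_le[OF assms(1) True] by auto
  then show ?thesis using bounded_\<Phi> assms(2) True space_D by (auto simp: truncated_loss_def lossV_vform)
next
  case False
  obtain y where "y \<in> space Y" using space_Y_nonempty by blast
  then have "\<bar>\<Phi> 0 y\<bar> \<le> c" using bounded_\<Phi> B_nonneg R_nonneg by auto
  then show ?thesis using False by (simp add: truncated_loss_def)
qed

lemma truncated_loss_lipschitz:
  assumes "z \<in> space D"
  shows "\<bar>truncated_loss W z - truncated_loss W' z\<bar> \<le> \<rho> * R * H.seminorm (W - W')"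
proof (cases "H.seminorm (fst z) \<le> R")
  case True
  have "\<bar>truncated_loss W z - truncated_loss W' z\<bar> \<le> \<rho> * \<bar>vform V (W - W') (fst z)\<bar>"
    using True abs_\<Phi>_diff_le assms space_D
    by (auto simp: truncated_loss_def lossV_vform bilinear_lsub[OF bilinear_vform])
  also have "\<dots> \<le> \<rho> * (H.seminorm (W - W') * R)"
    using H.cauchy_schwarz[of "W - W'" "fst z"] True H.seminorm_nonneg \<rho>_nonneg
    by (intro mult_left_mono) (auto intro: order_trans mult_left_mono)
  finally show ?thesis by (simp add: mult_ac)
next
  case False
  then show ?thesis using \<rho>_nonneg R_nonneg H.seminorm_nonneg by (simp add: truncated_loss_def)
qed

lemma continuous_on_seminorm_diff: "continuous_on UNIV (\<lambda>x. H.seminorm (x - W))"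
  unfolding H.seminorm_def by (intro continuous_intros continuous_on_vform)

lemma lossV_measurable: "lossV \<Phi> V W \<in> borel_measurable D"
proof -
  have "(\<lambda>x. vform V W x) \<in> borel_measurable borel"
    by (intro borel_measurable_continuous_onI continuous_on_vform continuous_intros)
  then have "(\<lambda>z. (vform V W (fst z), snd z)) \<in> measurable (borel \<Otimes>\<^sub>M Y) (borel \<Otimes>\<^sub>M Y)"
    by measurable
  from measurable_comp[OF this measurable_\<Phi>] show ?thesis
    unfolding measurable_cong_sets[OF sets_D refl] by (simp add: comp_def lossV_vform[abs_def])
qed

lemma seminorm_fst_measurable: "(\<lambda>z. H.seminorm (fst z)) \<in> borel_measurable D"
proof -
  have "H.seminorm \<in> borel_measurable borel"
    using continuous_on_seminorm_diff[of 0] by (intro borel_measurable_continuous_onI) simp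
  then show ?thesis unfolding measurable_cong_sets[OF sets_D refl] by measurable
qed

lemma truncated_loss_measurable: "truncated_loss W \<in> borel_measurable D"
  unfolding truncated_loss_def[abs_def]
  using lossV_measurable seminorm_fst_measurable by measurable

lemma integral_lossV_eq: "(\<integral>p. lossV \<Phi> V W p \<partial>D) = (\<integral>p. truncated_loss W p \<partial>D)"
proof (rule integral_cong_AE[OF lossV_measurable truncated_loss_measurable])
  show "AE p in D. lossV \<Phi> V W p = truncated_loss W p"
    using AE_norm_le by eventually_elim (simp add: truncated_loss_def normHV_eq_seminorm)
qed

lemma integral_truncated_loss_lipschitz:
  assumes "H.seminorm W \<le> B" "H.seminorm W' \<le> B"
  shows "\<bar>(\<integral>z. truncated_loss W z \<partial>D) - (\<integral>z. truncated_loss W' z \<partial>D)\<bar> \<le> \<rho> * R * H.seminorm (W - W')"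
proof -
  interpret prob_space D by (rule prob_space_D)
  have "integrable D (truncated_loss U)" if "H.seminorm U \<le> B" for U
    by (rule integrable_const_bound[where B = c])
      (use abs_truncated_loss_le[OF that] truncated_loss_measurable in auto)
  then have "(\<integral>z. truncated_loss W z \<partial>D) - (\<integral>z. truncated_loss W' z \<partial>D)
      = (\<integral>z. truncated_loss W z - truncated_loss W' z \<partial>D)"
    using assms by simp
  also have "\<bar>\<dots>\<bar> \<le> \<rho> * R * H.seminorm (W - W')"
    by (rule abs_integral_le_const) (use truncated_loss_measurable truncated_loss_lipschitz in auto)
  finally show ?thesis .
qed

lemma countable_dense_subset:
  obtains C where "countable C" "C \<noteq> {}" "C \<subseteq> {W. H.seminorm W \<le> B}"
    "\<And>W e. H.seminorm W \<le> B \<Longrightarrow> e > 0 \<Longrightarrow> \<exists>w\<in>C. H.seminorm (w - W) < e"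
proof -
  obtain C where C: "countable C" "C \<subseteq> {W. H.seminorm W \<le> B}" "{W. H.seminorm W \<le> B} \<subseteq> closure C"
    using separable by blast
  have dense: "\<exists>w\<in>C. H.seminorm (w - W) < e" if "H.seminorm W \<le> B" "e > 0" for W e
  proof -
    have "open {x. H.seminorm (x - W) < e}"
      by (rule open_Collect_less[OF continuous_on_seminorm_diff continuous_on_const])
    moreover have "W \<in> {x. H.seminorm (x - W) < e} \<inter> closure C"
      using that C(3) by (auto simp: H.seminorm_def bilinear_lzero[OF bilinear_vform])
    ultimately show ?thesis using open_Int_closure_eq_empty by blast
  qed
  have "C \<noteq> {}" using dense[of 0 1] B_nonneg by (auto simp: H.seminorm_def bilinear_lzero[OF bilinear_vform])
  then show thesis using that[OF C(1) _ C(2) dense] by blast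
qed

text \<open>Contraction reduces the Rademacher complexity of the losses to that of the
  linear functionals \<open>X \<mapsto> vform V W X\<close>; truncated sample points contribute the constant
  loss \<open>0\<close>, which we model by the point \<open>0\<close> and the contraction \<open>0\<close>.\<close>

lemma rademacher_truncated_loss:
  assumes C: "C \<noteq> {}" "C \<subseteq> {W. H.seminorm W \<le> B}"
    and S: "\<And>i. i < N \<Longrightarrow> S i \<in> space D" and s: "s = -1 \<or> s = 1"
  shows "(\<Sum>\<sigma>\<in>sign_vectors N. SUP w\<in>C. \<Sum>i<N. \<sigma> i * (s * truncated_loss w (S i)))
       \<le> 2 ^ N * (\<rho> * B * R * sqrt (real N))"
proof -
  define inside where "inside i \<longleftrightarrow> H.seminorm (fst (S i)) \<le> R" for i
  define X where "X i = (if inside i then fst (S i) else 0)" for i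
  define \<phi> where "\<phi> i a = s * (if inside i then \<Phi> a (snd (S i)) else 0)" for i a
  have loss_eq: "s * truncated_loss w (S i) = \<phi> i (vform V w (X i))" for i w
    by (simp add: truncated_loss_def \<phi>_def X_def inside_def lossV_vform)
  have X: "H.seminorm (X i) \<le> R" for i
    using R_nonneg by (simp add: X_def inside_def H.seminorm_def bilinear_lzero[OF bilinear_vform])
  have "(\<Sum>\<sigma>\<in>sign_vectors N. SUP w\<in>C. \<Sum>i<N. \<sigma> i * \<phi> i (vform V w (X i)))
      \<le> (\<Sum>\<sigma>\<in>sign_vectors N. SUP w\<in>C. \<Sum>i<N. \<sigma> i * (\<rho> * vform V w (X i)))"
  proof (rule rademacher_contraction[OF C(1) \<rho>_nonneg, where M = "B * R + c"])
    fix i a a' assume "i < N"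
    then have "snd (S i) \<in> space Y" using S space_D by force
    then show "\<bar>\<phi> i a - \<phi> i a'\<bar> \<le> \<rho> * \<bar>a - a'\<bar>"
      using abs_\<Phi>_diff_le[of "snd (S i)" a a'] s \<rho>_nonneg
      by (auto simp: \<phi>_def abs_minus_commute simp flip: right_diff_distrib)
  next
    fix w i assume "w \<in> C" "i < N"
    then have W: "H.seminorm w \<le> B" using C(2) by auto
    have c: "0 \<le> c" "0 \<le> B * R"
      using abs_truncated_loss_le[OF W S[OF \<open>i < N\<close>]] B_nonneg R_nonneg by auto
    show "\<bar>vform V w (X i)\<bar> \<le> B * R + c" using abs_vform_le[OF W X[of i]] c by linarith
    have "\<bar>\<phi> i (vform V w (X i))\<bar> = \<bar>truncated_loss w (S i)\<bar>"
      unfolding loss_eq[symmetric] using s by auto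
    then show "\<bar>\<phi> i (vform V w (X i))\<bar> \<le> B * R + c"
      using abs_truncated_loss_le[OF W S[OF \<open>i < N\<close>]] c by linarith
  qed
  also have "\<dots> \<le> 2 ^ N * (\<rho> * B * R * sqrt (real N))"
    by (rule H.rademacher_linear_bound[OF C(1) _ X \<rho>_nonneg B_nonneg R_nonneg]) (use C(2) in auto)
  finally show ?thesis by (simp only: loss_eq)
qed

lemma sum_deviation_le_of_dense:
  fixes N :: nat
  assumes C: "C \<subseteq> {W. H.seminorm W \<le> B}"
    and dense: "\<And>W e. H.seminorm W \<le> B \<Longrightarrow> e > 0 \<Longrightarrow> \<exists>w\<in>C. H.seminorm (w - W) < e"
    and S: "\<And>i. i < N \<Longrightarrow> S i \<in> space D"
    and bound: "\<And>w. w \<in> C \<Longrightarrow> (\<Sum>i<N. (\<integral>z. truncated_loss w z \<partial>D) - truncated_loss w (S i)) \<le> K"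
    and W: "H.seminorm W \<le> B"
  shows "(\<Sum>i<N. (\<integral>z. truncated_loss W z \<partial>D) - truncated_loss W (S i)) \<le> K"
proof (rule field_le_epsilon)
  define dev where "dev w = (\<Sum>i<N. (\<integral>z. truncated_loss w z \<partial>D) - truncated_loss w (S i))" for w
  define L where "L = 2 * real N * \<rho> * R"
  have "L \<ge> 0" unfolding L_def using \<rho>_nonneg R_nonneg by simp
  fix e :: real assume "e > 0"
  then obtain w where w: "w \<in> C" "H.seminorm (w - W) < e / (L + 1)"
    using dense[OF W, of "e / (L + 1)"] \<open>L \<ge> 0\<close> by auto
  have wB: "H.seminorm w \<le> B" using w(1) C by auto
  have "dev W - dev w = (\<Sum>i<N. ((\<integral>z. truncated_loss W z \<partial>D) - (\<integral>z. truncated_loss w z \<partial>D))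
      - (truncated_loss W (S i) - truncated_loss w (S i)))"
    unfolding dev_def by (simp add: sum_subtractf[symmetric] algebra_simps)
  also have "\<dots> \<le> (\<Sum>i<N. 2 * (\<rho> * R * H.seminorm (w - W)))"
  proof (rule sum_mono)
    fix i assume "i \<in> {..<N}"
    then show "(\<integral>z. truncated_loss W z \<partial>D) - (\<integral>z. truncated_loss w z \<partial>D)
        - (truncated_loss W (S i) - truncated_loss w (S i)) \<le> 2 * (\<rho> * R * H.seminorm (w - W))"
      using integral_truncated_loss_lipschitz[OF W wB] truncated_loss_lipschitz[OF S, of i W w]
        H.seminorm_minus_commute[of W w] by auto
  qed
  also have "\<dots> = L * H.seminorm (w - W)" by (simp add: L_def)
  also have "\<dots> \<le> L * (e / (L + 1))" using w(2) \<open>L \<ge> 0\<close> by (intro mult_left_mono) auto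
  also have "\<dots> \<le> e" using \<open>L \<ge> 0\<close> \<open>e > 0\<close> by (simp add: field_simps)
  finally show "dev W \<le> K + e" unfolding dev_def using bound[OF w(1)] by simp
qed

lemma AE_samples_inside:
  fixes N :: nat
  shows "AE S in PiM {..<N} (\<lambda>_. D). \<forall>i<N. H.seminorm (fst (S i)) \<le> R"
proof -
  have "AE S in PiM {..<N} (\<lambda>_. D). \<forall>i\<in>{..<N}. H.seminorm (fst (S i)) \<le> R"
  proof (rule AE_finite_allI)
    fix i assume "i \<in> {..<N}"
    then show "AE S in PiM {..<N} (\<lambda>_. D). H.seminorm (fst (S i)) \<le> R"
      using AE_PiM_component[of "{..<N}" "\<lambda>_. D" i "\<lambda>z. H.seminorm (fst z) \<le> R"]
        AE_norm_le prob_space_D by (simp add: normHV_eq_seminorm)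
  qed simp
  then show ?thesis by (rule eventually_mono) simp
qed

lemma mean_le_of_sum_diff_le:
  fixes l :: "nat \<Rightarrow> real"
  assumes "N > 0" and "(\<Sum>i<N. L - l i) \<le> 2 * (a * sqrt (real N)) + real N * t"
  shows "L \<le> (\<Sum>i<N. l i) / real N + 2 * a / sqrt (real N) + t"
proof -
  have "real N * L \<le> (\<Sum>i<N. l i) + 2 * (a * sqrt (real N)) + real N * t"
    using assms(2) by (simp add: sum_subtractf)
  then have "L \<le> ((\<Sum>i<N. l i) + 2 * (a * sqrt (real N)) + real N * t) / real N"
    using assms(1) by (simp add: pos_le_divide_eq mult.commute)
  also have "\<dots> = (\<Sum>i<N. l i) / real N + 2 * a / sqrt (real N) + t"
    using assms(1) by (simp add: field_simps real_sqrt_mult[symmetric])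
  finally show ?thesis .
qed

lemma bounded_function_class_truncated_loss:
  assumes "countable C" "C \<noteq> {}" "C \<subseteq> {W. H.seminorm W \<le> B}"
  shows "bounded_function_class D C truncated_loss c"
proof (rule bounded_function_class.intro)
  show "prob_space D" by (rule prob_space_D)
  show "countable C" "C \<noteq> {}" by (fact assms(1), fact assms(2))
  show "truncated_loss w \<in> borel_measurable D" for w by (rule truncated_loss_measurable)
  show "\<bar>truncated_loss w z\<bar> \<le> c" if "w \<in> C" "z \<in> space D" for w z
    using that assms(3) by (intro abs_truncated_loss_le) auto
qed

lemma risk_le_of_dense_deviation_le:
  fixes N :: nat
  assumes C: "C \<subseteq> {W. H.seminorm W \<le> B}"
    and dense: "\<And>W e. H.seminorm W \<le> B \<Longrightarrow> e > 0 \<Longrightarrow> \<exists>w\<in>C. H.seminorm (w - W) < e"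
    and S: "\<And>i. i < N \<Longrightarrow> S i \<in> space D \<and> H.seminorm (fst (S i)) \<le> R" and "N \<ge> 1"
    and bound: "\<And>w. w \<in> C \<Longrightarrow> (\<Sum>i<N. (\<integral>z. truncated_loss w z \<partial>D) - truncated_loss w (S i))
        \<le> 2 * (\<rho> * B * R * sqrt (real N)) + real N * t"
    and W: "normHV V W \<le> B"
  shows "(\<integral>p. lossV \<Phi> V W p \<partial>D)
    \<le> (\<Sum>i<N. lossV \<Phi> V W (S i)) / real N + 2 * \<rho> * B * R / sqrt (real N) + t"
proof -
  have "(\<Sum>i<N. (\<integral>p. lossV \<Phi> V W p \<partial>D) - lossV \<Phi> V W (S i))
      = (\<Sum>i<N. (\<integral>z. truncated_loss W z \<partial>D) - truncated_loss W (S i))"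
    using S by (intro sum.cong) (auto simp: truncated_loss_def integral_lossV_eq)
  also have "\<dots> \<le> 2 * (\<rho> * B * R * sqrt (real N)) + real N * t"
  proof (rule sum_deviation_le_of_dense[where N = N and S = S, OF C dense _ bound])
    show "S i \<in> space D" if "i < N" for i using S that by blast
    show "H.seminorm W \<le> B" using W by (simp add: normHV_eq_seminorm)
  qed
  finally have "(\<integral>p. lossV \<Phi> V W p \<partial>D)
      \<le> (\<Sum>i<N. lossV \<Phi> V W (S i)) / real N + 2 * (\<rho> * B * R) / sqrt (real N) + t"
    using \<open>N \<ge> 1\<close> by (intro mean_le_of_sum_diff_le) auto
  then show ?thesis by (simp add: mult.assoc)
qed

lemma uniform_deviation_bound:
  fixes N :: nat
  assumes "0 < \<delta>" "\<delta> < 1" "N \<ge> 1"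
  shows "\<exists>A \<in> sets (PiM {..<N} (\<lambda>_. D)).
           A \<subseteq> {S \<in> space (PiM {..<N} (\<lambda>_. D)).
                 \<forall>W::real^'n^'m. normHV V W \<le> B \<longrightarrow>
                   (\<integral>p. lossV \<Phi> V W p \<partial>D)
                   \<le> (\<Sum>i<N. lossV \<Phi> V W (S i)) / real N
                      + 2 * \<rho> * B * R / sqrt (real N)
                      + c * sqrt (2 * ln (2 / \<delta>) / real N)}
           \<and> measure (PiM {..<N} (\<lambda>_. D)) A \<ge> 1 - \<delta>"
proof -
  obtain C where C: "countable C" "C \<noteq> {}" "C \<subseteq> {W. H.seminorm W \<le> B}"
    and C_dense: "\<And>W e. H.seminorm W \<le> B \<Longrightarrow> e > 0 \<Longrightarrow> \<exists>w\<in>C. H.seminorm (w - W) < e"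
    using countable_dense_subset by metis
  interpret F: bounded_function_class D C truncated_loss c
    by (rule bounded_function_class_truncated_loss[OF C])
  let ?P = "PiM {..<N} (\<lambda>_. D)"
  interpret P: prob_space ?P by (rule F.prob_space_samples)
  define t where "t = c * sqrt (2 * ln (2 / \<delta>) / real N)"
  define inside where "inside = {S \<in> space ?P. \<forall>i<N. H.seminorm (fst (S i)) \<le> R}"
  define deviating where "deviating = {S \<in> space ?P.
      F.sup_deviation N S - (\<integral>S. F.sup_deviation N S \<partial>?P) > real N * t}"
  have sets: "inside \<in> sets ?P" "deviating \<in> sets ?P"
    unfolding inside_def deviating_def
    using seminorm_fst_measurable F.sup_deviation_measurable[of N] by measurable
  have "AE S in ?P. S \<in> inside"
    using AE_samples_inside[of N] AE_space[of ?P] by eventually_elim (simp add: inside_def)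
  then have "emeasure ?P (space ?P - inside) = 0"
    using AE_iff_measurable[of "space ?P - inside" ?P "\<lambda>S. S \<in> inside"] sets(1) by blast
  then have "measure ?P (space ?P - inside) = 0" by (simp add: measure_def)
  moreover have "measure ?P deviating \<le> \<delta> / 2"
    unfolding deviating_def t_def using F.sup_deviation_concentration assms by simp
  moreover have "measure ?P (space ?P - (inside - deviating)) \<le> measure ?P (space ?P - inside) + measure ?P deviating"
    using sets by (intro order_trans[OF P.finite_measure_mono measure_Un_le]) auto
  ultimately have measure_good: "measure ?P (inside - deviating) \<ge> 1 - \<delta>"
    using P.prob_compl[of "inside - deviating"] sets \<open>0 < \<delta>\<close> by auto
  have "(\<integral>S. F.sup_deviation N S \<partial>?P) \<le> 2 * (\<rho> * B * R * sqrt (real N))"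
    by (intro F.integral_sup_deviation_le_rademacher rademacher_truncated_loss[OF C(2,3)]) auto
  then have good_bound: "\<forall>W::real^'n^'m. normHV V W \<le> B \<longrightarrow> (\<integral>p. lossV \<Phi> V W p \<partial>D)
      \<le> (\<Sum>i<N. lossV \<Phi> V W (S i)) / real N + 2 * \<rho> * B * R / sqrt (real N) + t"
    if S: "S \<in> inside - deviating" for S
  proof (intro allI impI risk_le_of_dense_deviation_le[OF C(3) C_dense _ \<open>N \<ge> 1\<close>])
    show S_good: "S i \<in> space D \<and> H.seminorm (fst (S i)) \<le> R" if "i < N" for i
      using S that by (auto simp: inside_def intro: space_PiM_component)
    show "(\<Sum>i<N. (\<integral>z. truncated_loss w z \<partial>D) - truncated_loss w (S i))
        \<le> 2 * (\<rho> * B * R * sqrt (real N)) + real N * t" if "w \<in> C" for w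
    proof -
      have "(\<Sum>i<N. (\<integral>z. truncated_loss w z \<partial>D) - truncated_loss w (S i)) \<le> F.sup_deviation N S"
        unfolding F.sup_deviation_def
        by (rule cSUP_upper[OF that], rule bdd_above_image_abs_le, rule F.abs_deviation_le) (use S_good in auto)
      moreover have "S \<in> space ?P" "S \<notin> deviating" using S by (auto simp: inside_def)
      ultimately show ?thesis using \<open>(\<integral>S. F.sup_deviation N S \<partial>?P) \<le> _\<close> by (auto simp: deviating_def)
    qed
  qed
  have "inside - deviating \<subseteq> {S \<in> space ?P. \<forall>W::real^'n^'m. normHV V W \<le> B \<longrightarrow>
      (\<integral>p. lossV \<Phi> V W p \<partial>D) \<le> (\<Sum>i<N. lossV \<Phi> V W (S i)) / real N
        + 2 * \<rho> * B * R / sqrt (real N) + c * sqrt (2 * ln (2 / \<delta>) / real N)}"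
    using good_bound unfolding t_def by (auto simp: inside_def)
  with sets measure_good show ?thesis by (intro bexI[of _ "inside - deviating"] conjI) auto
qed

end

theorem theorem2:
  fixes V :: "real^'n^'n" and D :: "((real^'n^'m) \<times> 'y) measure" and Y :: "'y measure"
    and \<Phi> :: "real \<Rightarrow> 'y \<Rightarrow> real" and R' B' \<rho> c' \<delta> :: real and N :: nat
  assumes "V \<noteq> 0" and "transpose V = V"
    and "\<forall>X::real^'n^'m. inner (innerH X X) (Vnormalized V) \<ge> 0"
    and "prob_space D" and "sets D = sets (borel \<Otimes>\<^sub>M Y)"
    and "AE p in D. normHV V (fst p) \<le> R'"
    and "(\<lambda>(a, y). \<Phi> a y) \<in> borel_measurable (borel \<Otimes>\<^sub>M Y)"
    and "\<forall>y\<in>space Y. lipschitz_on \<rho> UNIV (\<lambda>a. \<Phi> a y)"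
    and "\<forall>y\<in>space Y. \<forall>a\<in>{-(B' * R')..B' * R'}. \<bar>\<Phi> a y\<bar> \<le> c'"
    and "0 < \<delta>" and "\<delta> < 1" and "N \<ge> 1"
  shows "\<exists>A \<in> sets (PiM {..<N} (\<lambda>_. D)).
           A \<subseteq> {S \<in> space (PiM {..<N} (\<lambda>_. D)).
                 \<forall>W::real^'n^'m. normHV V W \<le> B' \<longrightarrow>
                   (\<integral>p. lossV \<Phi> V W p \<partial>D)
                   \<le> (\<Sum>i<N. lossV \<Phi> V W (S i)) / real N
                      + 2 * \<rho> * B' * R' / sqrt (real N)
                      + c' * sqrt (2 * ln (2 / \<delta>) / real N)}
           \<and> measure (PiM {..<N} (\<lambda>_. D)) A \<ge> 1 - \<delta>"
proof (cases "0 \<le> B'")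
  case True
  interpret lipschitz_loss_setting V D Y \<Phi> R' B' \<rho> c'
    by (rule lipschitz_loss_setting.intro[OF assms(2-9) True])
  show ?thesis by (rule uniform_deviation_bound[OF assms(10-12)])
next
  case False
  then have "\<not> normHV V W \<le> B'" for W :: "real^'n^'m"
    using normHV_nonneg[of W V] assms(3) by force
  then have "space (PiM {..<N} (\<lambda>_. D)) \<subseteq> {S \<in> space (PiM {..<N} (\<lambda>_. D)).
                 \<forall>W::real^'n^'m. normHV V W \<le> B' \<longrightarrow>
                   (\<integral>p. lossV \<Phi> V W p \<partial>D)
                   \<le> (\<Sum>i<N. lossV \<Phi> V W (S i)) / real N
                      + 2 * \<rho> * B' * R' / sqrt (real N)
                      + c' * sqrt (2 * ln (2 / \<delta>) / real N)}"
    by blast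
  moreover have "prob_space (PiM {..<N} (\<lambda>_. D))"
    by (rule prob_space_PiM) (use assms(4) in auto)
  ultimately show ?thesis
    using \<open>0 < \<delta>\<close> by (intro bexI[of _ "space (PiM {..<N} (\<lambda>_. D))"] conjI) (auto simp: prob_space.prob_space)
qed

end
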